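(* For complex parameters $\alpha,a,b,c,\beta,\gamma$ with $\max\bigl\{\bigl|\alpha \beta abc/q^2\bigr|, \bigl|\alpha \gamma abc/q^2\bigr|\bigr\}<1$, we have \begin{align*} &\sum_{n=0}^\infty \frac{\bigl(1-\alpha q^{2n}\bigr)(\alpha, q/c; q)_n (c/q)^n}{(1-\alpha)(q, \alpha c; q)_n}\, {}_4 \phi_3 \biggl({{q^{-n}, \alpha q^n, \alpha \beta ab/q, \alpha \gamma ab/q}\atop{\alpha a, \alpha b,\alpha \beta \gamma ab/q}}; q, q\biggr)\\ &\qquad=\frac{\bigl(q\alpha, \alpha ac/q, \alpha bc/q, \alpha \beta ab/q, \alpha \gamma ab/q, \alpha \beta \gamma abc/q^2; q\bigr)_\infty}{\bigl(\alpha a, \alpha b, \alpha c, \alpha \beta abc/q^2, \alpha \gamma abc/q^2, \alpha \beta \gamma ab/q; q \bigr)_\infty}. \end{align*}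
   Context: Throughout, $q$ is a complex number with $0<|q|<1$. For $x\in\mathbb{C}$, $(x;q)_\infty=\prod_{k=0}^\infty(1-xq^k)$ and, for an integer $n\ge 0$, $(x;q)_n=\prod_{k=0}^{n-1}(1-xq^k)$; also $(x_1,\dots,x_m;q)_n=(x_1;q)_n\cdots(x_m;q)_n$ for $n$ an integer or $\infty$. The basic hypergeometric series is ${}_r\phi_s\Bigl({{a_1,\dots,a_r}\atop{b_1,\dots,b_s}};q,z\Bigr)=\sum_{n=0}^\infty \frac{(a_1,\dots,a_r;q)_n}{(q,b_1,\dots,b_s;q)_n}\bigl((-1)^nq^{n(n-1)/2}\bigr)^{1+s-r}z^n$. *)

theory Defs
  imports "HOL-Analysis.Analysis"
begin

definition qpoch :: "complex \<Rightarrow> complex \<Rightarrow> nat \<Rightarrow> complex" where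
  "qpoch x q n = (\<Prod>k<n. 1 - x * q ^ k)"

definition qpoch_inf :: "complex \<Rightarrow> complex \<Rightarrow> complex" where
  "qpoch_inf x q = (\<Prod>k. 1 - x * q ^ k)"

definition qpochs :: "complex list \<Rightarrow> complex \<Rightarrow> nat \<Rightarrow> complex" where
  "qpochs xs q n = prod_list (map (\<lambda>x. qpoch x q n) xs)"

definition qpochs_inf :: "complex list \<Rightarrow> complex \<Rightarrow> complex" where
  "qpochs_inf xs q = prod_list (map (\<lambda>x. qpoch_inf x q) xs)"

definition qphi :: "complex list \<Rightarrow> complex list \<Rightarrow> complex \<Rightarrow> complex \<Rightarrow> complex" where
  "qphi as bs q z = (\<Sum>n. qpochs as q n / qpochs (q # bs) q n
     * ((-1) ^ n * q ^ (n * (n - 1) div 2)) powi (1 + int (length bs) - int (length as)) * z ^ n)"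

end

theory Submission
  imports Defs "HOL-Complex_Analysis.Complex_Analysis"
begin

(*
  The identity is an instance of Liu's expansion theorem. Let |q| < 1 and a q^j <> 1 for all j. If f
  is analytic in a disc around 0 containing the nodes q^k, then
    (aq;q)_inf f(s) = sum_n (1 - a q^(2n)) (a;q)_n / ((1 - a) (q;q)_n) * T_n * (q/s;q)_n s^n (a q^(n+1) s;q)_inf,
    T_n = sum_(k<=n) (q^-n, a q^n;q)_k q^k / (q;q)_k * f(q^k).
  At s = q^k the series terminates, and the finite identity amounts to inverting the triangular
  system T: by the q-Chu-Vandermonde sum, the kernel of T_n is biorthogonal to the products
  (q/s;q)_l s^l evaluated at the nodes. Writing f as its Taylor series and expanding s^j in the
  basis (q/s;q)_l s^l shows T_n = O(r^-n) for every r below the radius, so the series converges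
  locally uniformly, and it agrees with (aq;q)_inf f by the identity theorem, since the nodes
  accumulate at 0. A disc that misses the first K nodes is handled by dividing them off, which
  replaces a by a q^(2K); when a q^j = 1 the series is a finite sum and the same argument applies.
  The theorem is the case f(s) = (us, vs, ws;q)_inf / (xs, ys;q)_inf at s = c/q: the values of f at
  the nodes are quotients of finite q-Pochhammer symbols, which turns T_n into the terminating 4phi3.
*)

section \<open>q-Pochhammer symbols\<close>

lemma qpoch_0 [simp]: "qpoch x q 0 = 1"
  by (simp add: qpoch_def)

lemma qpoch_0_left [simp]: "qpoch 0 q n = 1"
  by (simp add: qpoch_def)

lemma qpoch_Suc: "qpoch x q (Suc n) = qpoch x q n * (1 - x * q ^ n)"
  by (simp add: qpoch_def)

lemma qpoch_add: "qpoch x q (m + n) = qpoch x q m * qpoch (x * q ^ m) q n"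
  by (induction n) (simp_all add: qpoch_Suc power_add mult_ac)

lemma qpoch_Suc_left: "qpoch x q (Suc n) = (1 - x) * qpoch (x * q) q n"
  using qpoch_add[of x q 1 n] by (simp add: qpoch_def)

lemma qpoch_eq_0_iff: "qpoch x q n = 0 \<longleftrightarrow> (\<exists>k<n. x * q ^ k = 1)"
  by (auto simp: qpoch_def)

lemma isCont_qpoch [continuous_intros]: "isCont f a \<Longrightarrow> isCont (\<lambda>x. qpoch (f x) q n) a"
  unfolding qpoch_def by (intro continuous_intros)

locale qbase =
  fixes q :: complex
  assumes q_nonzero: "q \<noteq> 0" and norm_q_less_1: "norm q < 1"
begin

lemma q_pow_neq_1: "0 < n \<Longrightarrow> q ^ n \<noteq> 1"
proof
  assume "0 < n" "q ^ n = 1"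
  then have "norm q ^ n = 1" by (metis norm_one norm_power)
  moreover have "norm q ^ n < 1" using \<open>0 < n\<close> norm_q_less_1 by (simp add: power_less_one_iff)
  ultimately show False by simp
qed

lemma qpoch_q_nonzero: "qpoch q q n \<noteq> 0"
  using q_pow_neq_1[of "Suc _"] by (auto simp: qpoch_eq_0_iff simp flip: power_Suc)

lemma norm_q_pow_le_1 [simp]: "norm q ^ n \<le> 1"
  using norm_q_less_1 by (simp add: power_le_one)

lemma norm_q_pow_Suc_less_1 [simp]: "norm q * norm q ^ n < 1"
  using power_Suc_less_one[of "norm q" n] norm_q_less_1 q_nonzero by simp

lemma summable_norm_q_pow: "summable (\<lambda>k. norm q ^ k)"
  using norm_q_less_1 by (simp add: summable_geometric)

lemma suminf_norm_q_pow: "(\<Sum>k. norm q ^ k) = 1 / (1 - norm q)"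
  using norm_q_less_1 suminf_geometric[of "norm q"] by simp

lemma convergent_prod_qpoch_inf: "convergent_prod (\<lambda>k. 1 - z * q ^ k)"
proof -
  have "summable (\<lambda>k. norm ((1 - z * q ^ k) - 1))"
    using summable_norm_q_pow by (simp add: norm_mult norm_power summable_mult)
  then show ?thesis
    by (intro abs_convergent_prod_imp_convergent_prod summable_imp_abs_convergent_prod)
qed

lemma qpoch_LIMSEQ: "(\<lambda>n. qpoch z q n) \<longlonglongrightarrow> qpoch_inf z q"
  using convergent_prod_LIMSEQ[OF convergent_prod_qpoch_inf]
  unfolding qpoch_def qpoch_inf_def by (simp add: LIMSEQ_lessThan_iff_atMost)

lemma qpoch_inf_split: "qpoch_inf z q = qpoch z q n * qpoch_inf (z * q ^ n) q"
proof (rule LIMSEQ_unique)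
  show "(\<lambda>m. qpoch z q (n + m)) \<longlonglongrightarrow> qpoch_inf z q"
    using LIMSEQ_ignore_initial_segment[OF qpoch_LIMSEQ, of z n] by (simp add: add.commute)
  show "(\<lambda>m. qpoch z q (n + m)) \<longlonglongrightarrow> qpoch z q n * qpoch_inf (z * q ^ n) q"
    unfolding qpoch_add by (intro tendsto_mult tendsto_const qpoch_LIMSEQ)
qed

lemma qpoch_inf_eq_0_iff: "qpoch_inf z q = 0 \<longleftrightarrow> (\<exists>k. z * q ^ k = 1)"
proof
  assume "qpoch_inf z q = 0"
  then obtain k where "1 - z * q ^ k = 0"
    using prodinf_nonzero[OF convergent_prod_qpoch_inf] unfolding qpoch_inf_def by blast
  then show "\<exists>k. z * q ^ k = 1" by auto
next
  assume "\<exists>k. z * q ^ k = 1"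
  then obtain k where "z * q ^ k = 1" ..
  then have "qpoch z q (Suc k) = 0" by (simp add: qpoch_Suc)
  then show "qpoch_inf z q = 0" using qpoch_inf_split[of z "Suc k"] by simp
qed

lemma qpoch_inf_nonzero:
  assumes "norm z < 1" shows "qpoch_inf z q \<noteq> 0"
proof -
  have "norm (z * q ^ k) \<le> norm z" for k
    using norm_q_less_1 by (simp add: norm_mult norm_power mult_left_le power_le_one)
  then have "norm (z * q ^ k) < 1" for k
    using assms by (rule le_less_trans)
  then show ?thesis
    unfolding qpoch_inf_eq_0_iff by (metis norm_one order.irrefl)
qed

lemma norm_qpoch_le_exp: "norm (qpoch z q n) \<le> exp (norm z / (1 - norm q))"
proof -
  have "norm (qpoch z q n) \<le> (\<Prod>k<n. 1 + norm z * norm q ^ k)"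
    unfolding qpoch_def prod_norm[symmetric]
    by (intro prod_mono) (auto intro: order.trans[OF norm_triangle_ineq4] simp: norm_mult norm_power)
  also have "\<dots> \<le> (\<Prod>k<n. exp (norm z * norm q ^ k))"
    by (intro prod_mono) (auto simp: add.commute exp_ge_add_one_self)
  also have "\<dots> = exp (\<Sum>k<n. norm z * norm q ^ k)"
    by (simp add: exp_sum)
  also have "(\<Sum>k<n. norm z * norm q ^ k) \<le> (\<Sum>k. norm z * norm q ^ k)"
    by (intro sum_le_suminf summable_mult summable_norm_q_pow) auto
  also have "(\<Sum>k. norm z * norm q ^ k) = norm z / (1 - norm q)"
    using suminf_mult[OF summable_norm_q_pow, of "norm z"] suminf_norm_q_pow by simp
  finally show ?thesis by simp
qed

lemma norm_qpoch_inf_le_exp: "norm (qpoch_inf z q) \<le> exp (norm z / (1 - norm q))"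
  using tendsto_norm[OF qpoch_LIMSEQ] by (rule LIMSEQ_le_const2) (auto intro: norm_qpoch_le_exp)

lemma uniform_limit_qpoch:
  "uniform_limit (cball 0 R) (\<lambda>n z. qpoch z q n) (\<lambda>z. qpoch_inf z q) sequentially"
proof -
  have "uniform_limit (cball 0 R) (\<lambda>n z. \<Sum>k<n. norm (- z * q ^ k)) (\<lambda>z. \<Sum>k. norm (- z * q ^ k)) sequentially"
  proof (rule Weierstrass_m_test)
    show "norm (norm (- z * q ^ k)) \<le> \<bar>R\<bar> * norm q ^ k" if "z \<in> cball 0 R" for k z
      using that by (simp add: norm_mult norm_power mult_right_mono)
    show "summable (\<lambda>k. \<bar>R\<bar> * norm q ^ k)"
      using summable_norm_q_pow by (simp add: summable_mult)
  qed
  then have "uniformly_convergent_on (cball 0 R) (\<lambda>n z. \<Prod>k<n. 1 + (- z * q ^ k))"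
    by (intro uniformly_convergent_on_prod continuous_intros) (auto simp: uniformly_convergent_on_def)
  then obtain g where g: "uniform_limit (cball 0 R) (\<lambda>n z. qpoch z q n) g sequentially"
    unfolding uniformly_convergent_on_def qpoch_def by auto
  moreover have "g z = qpoch_inf z q" if "z \<in> cball 0 R" for z
    using tendsto_uniform_limitI[OF g that] qpoch_LIMSEQ LIMSEQ_unique by blast
  ultimately show ?thesis
    by (metis (mono_tags, lifting) uniform_limit_cong')
qed

lemma holomorphic_qpoch_inf_UNIV: "(\<lambda>z. qpoch_inf z q) holomorphic_on UNIV"
proof -
  have "(\<lambda>z. qpoch_inf z q) holomorphic_on ball 0 R" for R
  proof -
    have "\<forall>\<^sub>F n in sequentially. continuous_on (cball 0 R) (\<lambda>z. qpoch z q n)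
                                \<and> (\<lambda>z. qpoch z q n) holomorphic_on ball 0 R"
      unfolding qpoch_def by (intro always_eventually allI conjI continuous_intros holomorphic_intros)
    from holomorphic_uniform_limit[OF this uniform_limit_qpoch trivial_limit_sequentially]
    show ?thesis by blast
  qed
  then have "(\<lambda>z. qpoch_inf z q) field_differentiable (at z)" for z
    by (rule holomorphic_on_imp_differentiable_at[where s = "ball 0 (norm z + 1)"]) auto
  then show ?thesis
    unfolding holomorphic_on_def using field_differentiable_at_within by blast
qed

lemma holomorphic_qpoch_inf [holomorphic_intros]:
  "f holomorphic_on S \<Longrightarrow> (\<lambda>z. qpoch_inf (f z) q) holomorphic_on S"
  using holomorphic_on_compose[of f S "\<lambda>z. qpoch_inf z q"] holomorphic_qpoch_inf_UNIV
  by (auto simp: o_def intro: holomorphic_on_subset)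

lemma isCont_qpoch_inf [continuous_intros]:
  assumes "isCont f z" shows "isCont (\<lambda>x. qpoch_inf (f x) q) z"
proof (rule isCont_o2[OF assms])
  show "isCont (\<lambda>z. qpoch_inf z q) (f z)"
    using holomorphic_on_imp_continuous_on[OF holomorphic_qpoch_inf_UNIV]
    by (simp add: continuous_on_eq_continuous_at)
qed

end

section \<open>The expansion at the nodes\<close>

(*
  In the notation of the paper, node_prod q n s = (q/s;q)_n s^n, and expansion_term q a B n s is the
  n-th term of the expansion of (aq;q)_inf f(s) when B k = f(q^k).
*)

definition node_prod :: "complex \<Rightarrow> nat \<Rightarrow> complex \<Rightarrow> complex" where
  "node_prod q n s = (\<Prod>i<n. s - q ^ i)"

definition qkernel :: "complex \<Rightarrow> complex \<Rightarrow> nat \<Rightarrow> nat \<Rightarrow> complex" where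
  "qkernel q a n k = qpoch (inverse (q ^ n)) q k * qpoch (a * q ^ n) q k * q ^ k / qpoch q q k"

definition qtransform :: "complex \<Rightarrow> complex \<Rightarrow> (nat \<Rightarrow> complex) \<Rightarrow> nat \<Rightarrow> complex" where
  "qtransform q a B n = (\<Sum>k\<le>n. qkernel q a n k * B k)"

definition wp_coeff :: "complex \<Rightarrow> complex \<Rightarrow> nat \<Rightarrow> complex" where
  "wp_coeff q a n = (1 - a * q ^ (2 * n)) * qpoch a q n / ((1 - a) * qpoch q q n)"

definition expansion_basis :: "complex \<Rightarrow> complex \<Rightarrow> nat \<Rightarrow> complex \<Rightarrow> complex" where
  "expansion_basis q a n s = node_prod q n s * qpoch_inf (a * q ^ Suc n * s) q"

definition expansion_term :: "complex \<Rightarrow> complex \<Rightarrow> (nat \<Rightarrow> complex) \<Rightarrow> nat \<Rightarrow> complex \<Rightarrow> complex" where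
  "expansion_term q a B n s = wp_coeff q a n * qtransform q a B n * expansion_basis q a n s"

definition triangular :: "nat \<Rightarrow> nat" where
  "triangular l = (\<Sum>p<l. p)"

lemma triangular_Suc: "triangular (Suc l) = triangular l + l"
  by (simp add: triangular_def)

lemma double_triangular: "2 * triangular l + l = l * l"
  by (induction l) (simp_all add: triangular_def)

lemma node_prod_Suc: "node_prod q (Suc n) s = node_prod q n s * (s - q ^ n)"
  by (simp add: node_prod_def)

lemma node_prod_add: "node_prod q (K + m) s = node_prod q K s * (\<Prod>i<m. s - q ^ (K + i))"
  by (induction m) (simp_all add: node_prod_Suc)

lemma node_prod_node_eq_0: "m < l \<Longrightarrow> node_prod q l (q ^ m) = 0"
  unfolding node_prod_def by (intro prod_zero) auto

lemma triangular_system_unique: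
  fixes x y :: "nat \<Rightarrow> 'a::field"
  assumes "\<And>k. (\<Sum>m\<le>k. D k m * x m) = (\<Sum>m\<le>k. D k m * y m)" and "\<And>k. D k k \<noteq> 0"
  shows "x k = y k"
proof (induction k rule: less_induct)
  case (less k)
  have "(\<Sum>m<k. D k m * x m) + D k k * x k = (\<Sum>m<k. D k m * y m) + D k k * y k"
    using assms(1)[of k] by (simp add: lessThan_Suc_atMost[symmetric])
  moreover have "(\<Sum>m<k. D k m * x m) = (\<Sum>m<k. D k m * y m)"
    using less.IH by simp
  ultimately show ?case
    using assms(2)[of k] by simp
qed

lemma sum_atMost_drop_zeros:
  fixes f :: "nat \<Rightarrow> 'a::comm_monoid_add"
  assumes "l \<le> n" and "\<And>k. k < l \<Longrightarrow> f k = 0"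
  shows "(\<Sum>k\<le>n. f k) = (\<Sum>i\<le>n - l. f (l + i))"
proof -
  have "(\<Sum>k\<le>n. f k) = (\<Sum>k<l. f k) + (\<Sum>k=l..n. f k)"
    using assms(1) by (subst sum.union_disjoint[symmetric]) (auto intro!: sum.cong)
  also have "(\<Sum>k=l..n. f k) = (\<Sum>i=0..n - l. f (i + l))"
    using sum.shift_bounds_cl_nat_ivl[of f 0 l "n - l"] assms(1) by simp
  finally show ?thesis
    using assms(2) by (simp add: atMost_atLeast0 add.commute)
qed

lemma isCont_eq_0_off_countable:
  fixes F :: "'a::euclidean_space \<Rightarrow> 'b::real_normed_vector"
  assumes "isCont F a" and "countable S" and "\<And>x. x \<notin> S \<Longrightarrow> F x = 0"
  shows "F a = 0"
proof (rule tendsto_unique)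
  have "a islimpt - S"
  proof (rule islimpt_approachable[THEN iffD2], intro allI impI)
    fix e :: real assume "0 < e"
    then have "uncountable (ball a e)"
      by (rule uncountable_ball)
    moreover have "countable (S \<union> {a})"
      using assms(2) by simp
    ultimately have "\<not> ball a e \<subseteq> S \<union> {a}"
      using countable_subset by blast
    then show "\<exists>x\<in>- S. x \<noteq> a \<and> dist x a < e"
      by (auto simp: dist_commute)
  qed
  then show "at a within - S \<noteq> bot"
    by (simp add: trivial_limit_within)
  show "(F \<longlongrightarrow> F a) (at a within - S)"
    using continuous_at_imp_continuous_at_within[OF assms(1)] by (simp add: continuous_within)
  have "eventually (\<lambda>x. F x = 0) (at a within - S)"
    using assms(3) by (auto simp: eventually_at_filter)
  then show "(F \<longlongrightarrow> 0) (at a within - S)"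
    by (simp add: tendsto_eventually)
qed

context qbase
begin

lemma qpoch_inverse_pow_eq_0: "n < k \<Longrightarrow> qpoch (inverse (q ^ n)) q k = 0"
  using q_nonzero by (auto simp: qpoch_eq_0_iff)

lemma qpoch_inverse_pow_nonzero: "qpoch (inverse (q ^ n)) q n \<noteq> 0"
proof -
  have "inverse (q ^ n) * q ^ p \<noteq> 1" if "p < n" for p
  proof
    assume "inverse (q ^ n) * q ^ p = 1"
    then have "q ^ p = q ^ n"
      using q_nonzero by (simp add: field_simps)
    moreover have "q ^ p * q ^ (n - p) = q ^ n"
      using that by (simp flip: power_add)
    ultimately have "q ^ n * q ^ (n - p) = q ^ n * 1"
      by simp
    then show False
      using q_pow_neq_1[of "n - p"] that q_nonzero by simp
  qed
  then show ?thesis by (auto simp: qpoch_eq_0_iff)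
qed

lemma qpoch_generic_nonzero: "(\<And>j. a * q ^ j \<noteq> 1) \<Longrightarrow> qpoch (a * q ^ m) q n \<noteq> 0"
  by (simp add: qpoch_eq_0_iff mult.assoc flip: power_add)

lemma qpoch_generic_nonzero_Suc: "(\<And>j. a * q ^ j \<noteq> 1) \<Longrightarrow> qpoch (a * q) q n \<noteq> 0"
  using qpoch_generic_nonzero[of a 1 n] by simp

definition chu_term :: "complex \<Rightarrow> complex \<Rightarrow> nat \<Rightarrow> nat \<Rightarrow> complex" where
  "chu_term b c N i = qpoch (inverse (q ^ N)) q i * qpoch b q i * q ^ i * qpoch (c * q ^ i) q (N - i)
                        / qpoch q q i"

lemma chu_term_eq_0: "N < i \<Longrightarrow> chu_term b c N i = 0"
  by (simp add: chu_term_def qpoch_inverse_pow_eq_0)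

lemma chu_term_0: "chu_term b c N 0 = qpoch c q N"
  by (simp add: chu_term_def)

lemma chu_term_top_step: "chu_term b c (Suc N) (Suc N) = (b - inverse (q ^ N)) * chu_term b c N N"
proof -
  define Q where "Q = q ^ N"
  have nonzero: "Q \<noteq> 0" "qpoch q q N \<noteq> 0" "1 - q * Q \<noteq> 0"
    using q_nonzero qpoch_q_nonzero q_pow_neq_1[of "Suc N"] by (auto simp: Q_def)
  have "qpoch (inverse (q ^ Suc N)) q (Suc N) = (1 - inverse (q * Q)) * qpoch (inverse Q) q N"
    unfolding qpoch_Suc_left Q_def using q_nonzero by (simp add: field_simps)
  then have "chu_term b c (Suc N) (Suc N)
             = (1 - inverse (q * Q)) * qpoch (inverse Q) q N * (qpoch b q N * (1 - b * Q)) * (q * Q)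
               / (qpoch q q N * (1 - q * Q))"
    by (simp add: chu_term_def qpoch_Suc Q_def)
  also have "\<dots> = (b - inverse Q) * (qpoch (inverse Q) q N * qpoch b q N * Q / qpoch q q N)"
    using nonzero q_nonzero by (simp add: field_simps; simp add: algebra_simps)
  finally show ?thesis
    by (simp add: chu_term_def Q_def)
qed

lemma chu_term_step:
  assumes "j < N"
  shows "chu_term b c (Suc N) (Suc j) = (inverse (q ^ Suc j) - c * q ^ N) * chu_term b c N (Suc j)
           - (inverse (q ^ j) - b) * chu_term b c N j"
proof -
  define Q where "Q = q ^ j"
  define M where "M = q ^ N"
  define X where "X = qpoch (inverse (q ^ N)) q j"
  define Y where "Y = qpoch b q j"
  define W where "W = qpoch q q j"
  define Z where "Z = qpoch (c * q ^ Suc j) q (N - Suc j)"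
  have nonzero: "Q \<noteq> 0" "M \<noteq> 0" "W \<noteq> 0" "1 - q * Q \<noteq> 0"
    using q_nonzero qpoch_q_nonzero q_pow_neq_1[of "Suc j"] by (auto simp: Q_def M_def W_def)
  have "Suc j + (N - Suc j) = N" "N - j = Suc (N - Suc j)" "Suc N - Suc j = Suc (N - Suc j)"
    using assms by simp_all
  then have "c * q ^ Suc j * q ^ (N - Suc j) = c * M"
    unfolding M_def by (metis power_add mult.assoc)
  then have Z_Suc: "qpoch (c * q ^ Suc j) q (Suc N - Suc j) = Z * (1 - c * M)"
    using \<open>Suc N - Suc j = Suc (N - Suc j)\<close> by (simp only: qpoch_Suc Z_def)
  have Z_pred: "qpoch (c * q ^ j) q (N - j) = (1 - c * Q) * Z"
    using \<open>N - j = Suc (N - Suc j)\<close> by (simp add: qpoch_Suc_left Z_def Q_def mult_ac)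
  have "chu_term b c (Suc N) (Suc j) = (1 - inverse (q * M)) * X * (Y * (1 - b * Q)) * (q * Q)
                                          * (Z * (1 - c * M)) / (W * (1 - q * Q))"
    unfolding chu_term_def qpoch_Suc_left[of "inverse (q ^ Suc N)"] Z_Suc using q_nonzero
    by (simp add: qpoch_Suc X_def Y_def W_def Q_def M_def field_simps)
  also have "\<dots> = (inverse (q * Q) - c * M) * (X * (1 - Q / M) * (Y * (1 - b * Q)) * (q * Q) * Z
                                                  / (W * (1 - q * Q)))
                  - (inverse Q - b) * (X * Y * Q * ((1 - c * Q) * Z) / W)"
    using nonzero q_nonzero by (simp add: field_simps; simp add: algebra_simps)
  also have "\<dots> = (inverse (q ^ Suc j) - c * q ^ N) * chu_term b c N (Suc j) - (inverse (q ^ j) - b) * chu_term b c N j"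
    unfolding chu_term_def Z_pred[symmetric]
    by (simp add: qpoch_Suc X_def Y_def W_def Q_def M_def Z_def field_simps)
  finally show ?thesis .
qed

lemma chu_term_recurrence:
  assumes "j \<le> N"
  shows "chu_term b c (Suc N) (Suc j) = (inverse (q ^ Suc j) - c * q ^ N) * chu_term b c N (Suc j)
           - (inverse (q ^ j) - b) * chu_term b c N j"
proof (cases "j = N")
  case True
  then show ?thesis
    by (simp add: chu_term_top_step chu_term_eq_0 algebra_simps)
next
  case False
  with assms show ?thesis
    by (simp add: chu_term_step)
qed

(* The q-Chu-Vandermonde sum 2phi1(q^-N, b; c; q, q) = (c/b;q)_N b^N / (c;q)_N, multiplied by (c;q)_N. *)
theorem q_chu_vandermonde: "(\<Sum>i\<le>N. chu_term b c N i) = (\<Prod>i<N. b - c * q ^ i)"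
proof (induction N)
  case 0
  then show ?case by (simp add: chu_term_def)
next
  case (Suc N)
  define u where "u j = (inverse (q ^ j) - b) * chu_term b c N j" for j
  have shift: "(\<Sum>j\<le>N. chu_term b c N (Suc j)) = (\<Sum>j\<le>N. chu_term b c N j) - chu_term b c N 0"
    using sum.atMost_Suc_shift[of "chu_term b c N" N] by (simp add: chu_term_eq_0)
  have "(\<Sum>i\<le>Suc N. chu_term b c (Suc N) i)
        = chu_term b c (Suc N) 0 + (\<Sum>j\<le>N. chu_term b c (Suc N) (Suc j))"
    by (rule sum.atMost_Suc_shift)
  also have "(\<Sum>j\<le>N. chu_term b c (Suc N) (Suc j))
             = (\<Sum>j\<le>N. (u (Suc j) - u j) + (b - c * q ^ N) * chu_term b c N (Suc j))"
    by (intro sum.cong refl) (simp add: chu_term_recurrence u_def algebra_simps)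
  also have "\<dots> = (\<Sum>j\<le>N. u (Suc j) - u j) + (b - c * q ^ N) * (\<Sum>j\<le>N. chu_term b c N (Suc j))"
    by (simp add: sum.distrib sum_distrib_left)
  also have "(\<Sum>j\<le>N. u (Suc j) - u j) = u (Suc N) - u 0"
    using sum_lessThan_telescope[of u "Suc N"] by (simp add: lessThan_Suc_atMost)
  also have "u (Suc N) = 0"
    by (simp add: u_def chu_term_eq_0)
  finally show ?case
    using Suc.IH by (simp add: shift u_def chu_term_0 qpoch_Suc algebra_simps)
qed

lemma node_prod_node:
  assumes "l \<le> m"
  shows "node_prod q l (q ^ m) * qpoch q q (m - l) = (-1) ^ l * q ^ triangular l * qpoch q q m"
  using assms
proof (induction l)
  case 0
  then show ?case by (simp add: node_prod_def triangular_def)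
next
  case (Suc l)
  then have "l < m" by simp
  then have "m - l = Suc (m - Suc l)"
    by simp
  then have qpoch_split: "qpoch q q (m - l) = qpoch q q (m - Suc l) * (1 - q ^ (m - l))"
    by (simp only: qpoch_Suc power_Suc)
  have pow_split: "q ^ m = q ^ l * q ^ (m - l)"
    using \<open>l < m\<close> by (simp flip: power_add)
  have "node_prod q (Suc l) (q ^ m) * qpoch q q (m - Suc l)
        = (- (q ^ l)) * (node_prod q l (q ^ m) * qpoch q q (m - l))"
    unfolding node_prod_Suc qpoch_split by (subst (2) pow_split) (simp add: algebra_simps)
  also have "\<dots> = (-1) ^ Suc l * q ^ triangular (Suc l) * qpoch q q m"
    using Suc.IH \<open>l < m\<close> by (simp add: triangular_Suc power_add)
  finally show ?case .
qed

lemma node_prod_diag: "node_prod q l (q ^ l) = (-1) ^ l * q ^ triangular l * qpoch q q l"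
  using node_prod_node[of l l] by simp

lemma node_prod_diag_nonzero: "node_prod q l (q ^ l) \<noteq> 0"
  using q_nonzero qpoch_q_nonzero by (simp add: node_prod_diag)

lemma node_prod_node_add:
  "node_prod q l (q ^ (l + i)) = node_prod q l (q ^ l) * qpoch q q (l + i) / (qpoch q q l * qpoch q q i)"
  using node_prod_node[of l "l + i"] qpoch_q_nonzero by (simp add: node_prod_diag field_simps)

lemma node_prod_diag_qpoch_inverse:
  "node_prod q l (q ^ l) * q ^ l * qpoch (inverse (q ^ l)) q l = qpoch q q l ^ 2"
proof -
  have "qpoch (inverse (q ^ l)) q l = (\<Prod>p<l. (q ^ l - q ^ p) / q ^ l)"
    unfolding qpoch_def using q_nonzero by (intro prod.cong refl) (simp add: field_simps)
  also have "\<dots> = node_prod q l (q ^ l) / q ^ (l * l)"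
    by (simp add: prod_dividef node_prod_def power_mult)
  finally have "node_prod q l (q ^ l) * q ^ l * qpoch (inverse (q ^ l)) q l
                = node_prod q l (q ^ l) ^ 2 * q ^ l / q ^ (l * l)"
    by (simp add: power2_eq_square)
  also have "\<dots> = qpoch q q l ^ 2 * q ^ (2 * triangular l + l) / q ^ (l * l)"
    by (simp add: node_prod_diag power_mult_distrib power_add power_mult[symmetric] algebra_simps)
  also have "\<dots> = qpoch q q l ^ 2"
    using q_nonzero by (simp add: double_triangular)
  finally show ?thesis .
qed

lemma shifted_param_pow: "l \<le> n \<Longrightarrow> a * q ^ (2 * l) * q ^ (n - l) = a * q ^ (n + l)"
  by (simp add: mult.assoc add.commute flip: power_add)

lemma qtransform_node_prod_weighted:
  assumes "l \<le> n"
  shows "(\<Sum>k\<le>n. qkernel q a n k * node_prod q l (q ^ k) * h k) =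
    node_prod q l (q ^ l) * q ^ l / qpoch q q l * qpoch (inverse (q ^ n)) q l * qpoch (a * q ^ n) q l *
    (\<Sum>i\<le>n - l. qkernel q (a * q ^ (2 * l)) (n - l) i * h (l + i))"
proof -
  have "(\<Sum>k\<le>n. qkernel q a n k * node_prod q l (q ^ k) * h k)
        = (\<Sum>i\<le>n - l. qkernel q a n (l + i) * node_prod q l (q ^ (l + i)) * h (l + i))"
    by (rule sum_atMost_drop_zeros[OF assms]) (simp add: node_prod_node_eq_0)
  also have "\<dots> = (\<Sum>i\<le>n - l. node_prod q l (q ^ l) * q ^ l / qpoch q q l * qpoch (inverse (q ^ n)) q l
                     * qpoch (a * q ^ n) q l * (qkernel q (a * q ^ (2 * l)) (n - l) i * h (l + i)))"
  proof (intro sum.cong refl)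
    fix i
    have "inverse (q ^ n) * q ^ l = inverse (q ^ (n - l))"
      using assms q_nonzero by (simp add: power_diff field_simps)
    then have "qpoch (inverse (q ^ n)) q (l + i)
               = qpoch (inverse (q ^ n)) q l * qpoch (inverse (q ^ (n - l))) q i"
      by (simp add: qpoch_add)
    moreover have "qpoch (a * q ^ n) q (l + i) = qpoch (a * q ^ n) q l * qpoch (a * q ^ (2 * l) * q ^ (n - l)) q i"
      unfolding qpoch_add shifted_param_pow[OF assms] by (simp add: mult.assoc power_add)
    ultimately show "qkernel q a n (l + i) * node_prod q l (q ^ (l + i)) * h (l + i)
        = node_prod q l (q ^ l) * q ^ l / qpoch q q l * qpoch (inverse (q ^ n)) q l
          * qpoch (a * q ^ n) q l * (qkernel q (a * q ^ (2 * l)) (n - l) i * h (l + i))"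
      unfolding qkernel_def node_prod_node_add
      using qpoch_q_nonzero[of "l + i"] qpoch_q_nonzero[of l] qpoch_q_nonzero[of i]
      by (simp add: field_simps power_add)
  qed
  finally show ?thesis
    by (simp add: sum_distrib_left)
qed

lemma qtransform_node_prod:
  "qtransform q a (\<lambda>k. node_prod q l (q ^ k)) n =
    (if l \<le> n then node_prod q l (q ^ l) * q ^ l / qpoch q q l * qpoch (inverse (q ^ n)) q l
       * qpoch (a * q ^ n) q l * (a * q ^ (n + l)) ^ (n - l) else 0)"
proof (cases "l \<le> n")
  case True
  have "(\<Sum>i\<le>n - l. qkernel q (a * q ^ (2 * l)) (n - l) i) = (\<Sum>i\<le>n - l. chu_term (a * q ^ (n + l)) 0 (n - l) i)"
    using True by (intro sum.cong refl) (simp add: qkernel_def chu_term_def shifted_param_pow)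
  also have "\<dots> = (a * q ^ (n + l)) ^ (n - l)"
    by (simp add: q_chu_vandermonde)
  finally show ?thesis
    using qtransform_node_prod_weighted[OF True, of a "\<lambda>_. 1"] True by (simp add: qtransform_def)
qed (simp add: qtransform_def node_prod_node_eq_0)

lemma q_chu_vandermonde_quotient:
  assumes "qpoch c q N \<noteq> 0"
  shows "(\<Sum>i\<le>N. qkernel q b N i / qpoch c q i) = (\<Prod>i<N. b * q ^ N - c * q ^ i) / qpoch c q N"
proof -
  have "(\<Sum>i\<le>N. qkernel q b N i / qpoch c q i) = (\<Sum>i\<le>N. chu_term (b * q ^ N) c N i / qpoch c q N)"
  proof (intro sum.cong refl)
    fix i assume "i \<in> {..N}"
    then have "qpoch c q N = qpoch c q i * qpoch (c * q ^ i) q (N - i)"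
      using qpoch_add[of c q i "N - i"] by simp
    then show "qkernel q b N i / qpoch c q i = chu_term (b * q ^ N) c N i / qpoch c q N"
      using assms by (auto simp: qkernel_def chu_term_def field_simps)
  qed
  then show ?thesis
    by (simp add: q_chu_vandermonde flip: sum_divide_distrib)
qed

lemma wp_coeff_diag:
  assumes generic: "\<And>j. a * q ^ j \<noteq> 1"
  shows "wp_coeff q a l * (node_prod q l (q ^ l) * q ^ l / qpoch q q l * qpoch (inverse (q ^ l)) q l
           * qpoch (a * q ^ l) q l / qpoch (a * q) q (2 * l)) = 1"
proof -
  have numerator: "(1 - a * q ^ (2 * l)) * (qpoch a q l * qpoch (a * q ^ l) q l)
        = (1 - a) * qpoch (a * q) q (2 * l)"
  proof -
    have "(1 - a * q ^ (2 * l)) * (qpoch a q l * qpoch (a * q ^ l) q l)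
          = qpoch a q (2 * l) * (1 - a * q ^ (2 * l))"
      using qpoch_add[of a q l l] by (simp add: mult_2)
    also have "\<dots> = (1 - a) * qpoch (a * q) q (2 * l)"
      by (simp only: qpoch_Suc[symmetric] qpoch_Suc_left)
    finally show ?thesis .
  qed
  have nonzero: "(1 - a) * qpoch (a * q) q (2 * l) * (qpoch q q l * qpoch q q l) \<noteq> 0"
    using generic[of 0] qpoch_generic_nonzero_Suc[OF generic] qpoch_q_nonzero by auto
  have "wp_coeff q a l * (node_prod q l (q ^ l) * q ^ l / qpoch q q l * qpoch (inverse (q ^ l)) q l
           * qpoch (a * q ^ l) q l / qpoch (a * q) q (2 * l))
        = ((1 - a * q ^ (2 * l)) * (qpoch a q l * qpoch (a * q ^ l) q l))
          * (node_prod q l (q ^ l) * q ^ l * qpoch (inverse (q ^ l)) q l)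
          / ((1 - a) * qpoch (a * q) q (2 * l) * (qpoch q q l * qpoch q q l))"
    unfolding wp_coeff_def by (simp add: field_simps)
  also have "\<dots> = 1"
    unfolding numerator node_prod_diag_qpoch_inverse power2_eq_square using nonzero by simp
  finally show ?thesis .
qed

lemma wp_coeff_qkernel_biorthogonal:
  assumes generic: "\<And>j. a * q ^ j \<noteq> 1" and "l \<le> n"
  shows "wp_coeff q a l * (\<Sum>k\<le>n. qkernel q a n k * node_prod q l (q ^ k) * (1 / qpoch (a * q) q (l + k)))
         = (if n = l then 1 else 0)"
proof -
  define N where "N = n - l"
  define c where "c = a * q ^ (2 * l + 1)"
  have "qpoch c q N \<noteq> 0"
    unfolding c_def by (rule qpoch_generic_nonzero[OF generic])
  have split: "qpoch (a * q) q (l + (l + i)) = qpoch (a * q) q (2 * l) * qpoch c q i" for i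
    using qpoch_add[of "a * q" q "2 * l" i] by (simp add: c_def mult_2 add.assoc power_add mult.assoc)
  have inner: "(\<Sum>i\<le>N. qkernel q (a * q ^ (2 * l)) N i * (1 / qpoch (a * q) q (l + (l + i))))
      = (\<Sum>i\<le>N. qkernel q (a * q ^ (2 * l)) N i / qpoch c q i) / qpoch (a * q) q (2 * l)"
    unfolding split by (simp add: sum_divide_distrib ac_simps)
  also have "\<dots> = (\<Prod>i<N. a * q ^ (2 * l) * q ^ N - c * q ^ i) / qpoch c q N / qpoch (a * q) q (2 * l)"
    unfolding q_chu_vandermonde_quotient[OF \<open>qpoch c q N \<noteq> 0\<close>] ..
  finally have inner: "(\<Sum>i\<le>N. qkernel q (a * q ^ (2 * l)) N i * (1 / qpoch (a * q) q (l + (l + i))))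
      = (\<Prod>i<N. a * q ^ (2 * l) * q ^ N - c * q ^ i) / qpoch c q N / qpoch (a * q) q (2 * l)" .
  have lhs: "wp_coeff q a l * (\<Sum>k\<le>n. qkernel q a n k * node_prod q l (q ^ k) * (1 / qpoch (a * q) q (l + k)))
      = wp_coeff q a l * (node_prod q l (q ^ l) * q ^ l / qpoch q q l * qpoch (inverse (q ^ n)) q l
          * qpoch (a * q ^ n) q l
          * ((\<Prod>i<N. a * q ^ (2 * l) * q ^ N - c * q ^ i) / qpoch c q N / qpoch (a * q) q (2 * l)))"
    unfolding qtransform_node_prod_weighted[OF assms(2)] N_def[symmetric] inner ..
  show ?thesis
  proof (cases "n = l")
    case True
    then show ?thesis
      using lhs wp_coeff_diag[OF generic, of l] by (simp add: N_def)
  next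
    case False
    then have "N - 1 < N" "2 * l + N = 2 * l + 1 + (N - 1)"
      using assms(2) by (simp_all add: N_def)
    moreover from this(2) have "a * q ^ (2 * l) * q ^ N = c * q ^ (N - 1)"
      unfolding c_def by (metis mult.assoc power_add)
    ultimately have "(\<Prod>i<N. a * q ^ (2 * l) * q ^ N - c * q ^ i) = 0"
      by (intro prod_zero) auto
    then show ?thesis
      using lhs False by simp
  qed
qed

lemma qkernel_diag_nonzero: "(\<And>j. a * q ^ j \<noteq> 1) \<Longrightarrow> qkernel q a n n \<noteq> 0"
  using qpoch_inverse_pow_nonzero qpoch_generic_nonzero[of a n n] qpoch_q_nonzero q_nonzero
  by (simp add: qkernel_def)

lemma qtransform_inject:
  assumes "\<And>n. qtransform q a X n = qtransform q a Y n" and "\<And>j. a * q ^ j \<noteq> 1"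
  shows "X k = Y k"
proof (rule triangular_system_unique[where D = "qkernel q a"])
  show "(\<Sum>m\<le>k. qkernel q a k m * X m) = (\<Sum>m\<le>k. qkernel q a k m * Y m)" for k
    using assms(1)[of k] by (simp only: qtransform_def)
  show "qkernel q a k k \<noteq> 0" for k
    using assms(2) by (rule qkernel_diag_nonzero)
qed

lemma expansion_basis_node:
  "expansion_basis q a n (q ^ k) * qpoch (a * q) q (n + k) = node_prod q n (q ^ k) * qpoch_inf (a * q) q"
proof -
  have "a * q ^ Suc n * q ^ k = a * q * q ^ (n + k)"
    by (simp add: power_add mult_ac)
  then have "expansion_basis q a n (q ^ k) = node_prod q n (q ^ k) * qpoch_inf (a * q * q ^ (n + k)) q"
    by (simp only: expansion_basis_def)
  then show ?thesis
    using qpoch_inf_split[of "a * q" "n + k"] by (simp add: mult_ac)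
qed

lemma expansion_at_nodes_generic:
  assumes generic: "\<And>j. a * q ^ j \<noteq> 1"
  shows "(\<Sum>n\<le>k. expansion_term q a B n (q ^ k)) = qpoch_inf (a * q) q * B k"
proof -
  define C where "C k = (\<Sum>n\<le>k. wp_coeff q a n * qtransform q a B n * node_prod q n (q ^ k)
                                    / qpoch (a * q) q (n + k))" for k
  have "qtransform q a C n = qtransform q a B n" for n
  proof -
    have "qtransform q a C n = (\<Sum>k\<le>n. \<Sum>l\<le>n. qkernel q a n k * (wp_coeff q a l * qtransform q a B l
                                  * node_prod q l (q ^ k) / qpoch (a * q) q (l + k)))"
      unfolding qtransform_def[of q a C] C_def sum_distrib_left
    proof (rule sum.cong[OF refl])
      fix k assume "k \<in> {..n}"
      then show "(\<Sum>l\<le>k. qkernel q a n k * (wp_coeff q a l * qtransform q a B l * node_prod q l (q ^ k)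
                   / qpoch (a * q) q (l + k)))
               = (\<Sum>l\<le>n. qkernel q a n k * (wp_coeff q a l * qtransform q a B l * node_prod q l (q ^ k)
                   / qpoch (a * q) q (l + k)))"
        by (intro sum.mono_neutral_left) (auto simp: node_prod_node_eq_0)
    qed
    also have "\<dots> = (\<Sum>l\<le>n. qtransform q a B l * (wp_coeff q a l * (\<Sum>k\<le>n. qkernel q a n k
                       * node_prod q l (q ^ k) * (1 / qpoch (a * q) q (l + k)))))"
      by (subst sum.swap) (simp add: sum_distrib_left mult_ac)
    also have "\<dots> = (\<Sum>l\<le>n. qtransform q a B l * (if n = l then 1 else 0))"
    proof (rule sum.cong[OF refl])
      fix l assume "l \<in> {..n}"
      then show "qtransform q a B l * (wp_coeff q a l * (\<Sum>k\<le>n. qkernel q a n k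
                   * node_prod q l (q ^ k) * (1 / qpoch (a * q) q (l + k))))
                 = qtransform q a B l * (if n = l then 1 else 0)"
        using wp_coeff_qkernel_biorthogonal[OF generic, of l n] by simp
    qed
    also have "\<dots> = qtransform q a B n"
      by (simp add: if_distrib[of "\<lambda>x. qtransform q a B _ * x"] sum.delta' cong: if_cong)
    finally show ?thesis .
  qed
  then have "C k = B k"
    by (rule qtransform_inject) (rule generic)
  moreover have "expansion_basis q a n (q ^ k)
                 = node_prod q n (q ^ k) * qpoch_inf (a * q) q / qpoch (a * q) q (n + k)" for n
    using expansion_basis_node[of a n k] qpoch_generic_nonzero_Suc[OF generic] by (simp add: field_simps)
  then have "(\<Sum>n\<le>k. expansion_term q a B n (q ^ k)) = qpoch_inf (a * q) q * C k"
    unfolding C_def sum_distrib_left expansion_term_def by (intro sum.cong refl) (simp add: mult_ac)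
  ultimately show ?thesis
    by simp
qed

lemma expansion_at_nodes:
  assumes "a \<noteq> 1"
  shows "(\<Sum>n\<le>k. expansion_term q a B n (q ^ k)) = qpoch_inf (a * q) q * B k"
proof -
  \<comment> \<open>Both sides are continuous in \<open>a\<close>, and only the countably many \<open>a = q^-j\<close> are not generic.\<close>
  define F where "F x = (\<Sum>n\<le>k. expansion_term q x B n (q ^ k)) - qpoch_inf (x * q) q * B k" for x
  have cont: "isCont F a"
    unfolding F_def expansion_term_def wp_coeff_def qtransform_def qkernel_def expansion_basis_def node_prod_def
    using assms qpoch_q_nonzero by (intro continuous_intros) auto
  have zero: "F x = 0" if "x \<notin> range (\<lambda>j. inverse (q ^ j))" for x
  proof -
    have "x * q ^ j \<noteq> 1" for j
    proof
      assume "x * q ^ j = 1"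
      then have "inverse (q ^ j) = x"
        by (simp add: inverse_unique mult.commute)
      then show False
        using that by auto
    qed
    then show ?thesis
      unfolding F_def by (simp add: expansion_at_nodes_generic)
  qed
  have "F a = 0"
    by (rule isCont_eq_0_off_countable[where S = "range (\<lambda>j. inverse (q ^ j))", OF cont _ zero]) simp
  then show ?thesis
    by (simp add: F_def)
qed

end

section \<open>Growth of the coefficients\<close>

fun qstirling :: "complex \<Rightarrow> nat \<Rightarrow> nat \<Rightarrow> complex" where
  "qstirling q 0 i = (if i = 0 then 1 else 0)"
| "qstirling q (Suc j) i = (if i = 0 then 0 else qstirling q j (i - 1)) + q ^ i * qstirling q j i"

lemma qstirling_eq_0: "j < i \<Longrightarrow> qstirling q j i = 0"
  by (induction j arbitrary: i) auto

lemma power_eq_sum_qstirling: "s ^ j = (\<Sum>i\<le>j. qstirling q j i * node_prod q i s)"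
proof (induction j)
  case 0
  then show ?case by (simp add: node_prod_def)
next
  case (Suc j)
  have "s ^ Suc j = (\<Sum>i\<le>j. qstirling q j i * node_prod q (Suc i) s) + (\<Sum>i\<le>j. q ^ i * qstirling q j i * node_prod q i s)"
    by (simp add: Suc sum_distrib_left node_prod_Suc algebra_simps flip: sum.distrib)
  also have "(\<Sum>i\<le>j. q ^ i * qstirling q j i * node_prod q i s) = (\<Sum>i\<le>Suc j. q ^ i * qstirling q j i * node_prod q i s)"
    by (simp add: qstirling_eq_0)
  also have "(\<Sum>i\<le>j. qstirling q j i * node_prod q (Suc i) s)
             = (\<Sum>i\<le>Suc j. (if i = 0 then 0 else qstirling q j (i - 1)) * node_prod q i s)"
    by (subst sum.atMost_Suc_shift) simp
  finally show ?case
    by (simp add: algebra_simps flip: sum.distrib)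
qed

lemma exp_neg_le_one_minus:
  fixes x :: real
  assumes "0 \<le> x" and "x < 1"
  shows "exp (- (x / (1 - x))) \<le> 1 - x"
proof -
  have "1 / (1 - x) \<le> exp (x / (1 - x))"
    using exp_ge_add_one_self[of "x / (1 - x)"] assms by (simp add: field_simps)
  then show ?thesis
    using assms by (simp add: exp_minus field_simps)
qed

lemma qtransform_sums:
  assumes "\<And>k. (\<lambda>j. g j k) sums F k"
  shows "(\<lambda>j. qtransform q a (g j) m) sums qtransform q a F m"
  unfolding qtransform_def by (intro sums_sum sums_mult assms)

lemma qtransform_cmult: "qtransform q a (\<lambda>k. c * g k) m = c * qtransform q a g m"
  by (simp add: qtransform_def sum_distrib_left mult_ac)

lemma geometric_tail_sums:
  fixes r :: real
  assumes "0 \<le> r" "r < 1"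
  shows "(\<lambda>j. if i \<le> j then r ^ j else 0) sums (r ^ i / (1 - r))"
proof -
  have "(\<lambda>n. r ^ i * r ^ n) sums (r ^ i * (1 / (1 - r)))"
    using assms by (intro sums_mult geometric_sums) auto
  then have "(\<lambda>n. (\<lambda>j. if i \<le> j then r ^ j else 0) (n + i))
             sums (r ^ i / (1 - r) + (\<Sum>j<i. (\<lambda>j. if i \<le> j then r ^ j else 0) j))"
    by (simp add: power_add mult_ac)
  then show ?thesis
    by (subst (asm) sums_iff_shift) simp
qed

lemma sum_half_pow_rev_le: "(\<Sum>i\<le>m. (1 / 2 :: real) ^ (m - i)) \<le> 2"
proof -
  have "(\<Sum>i\<le>m. (1 / 2 :: real) ^ (m - i)) = (\<Sum>i<Suc m. (1 / 2) ^ i)"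
    using sum.nat_diff_reindex[of "\<lambda>i. (1 / 2 :: real) ^ i" "Suc m"] by (simp add: lessThan_Suc_atMost)
  also have "\<dots> \<le> (\<Sum>i. (1 / 2) ^ i)"
    by (intro sum_le_suminf summable_geometric) auto
  finally show ?thesis
    using suminf_geometric[of "1 / 2 :: real"] by simp
qed

lemma taylor_coeff_bound:
  fixes f :: "complex \<Rightarrow> complex"
  assumes holo: "f holomorphic_on ball 0 \<rho>" and r: "0 < r" "r < \<rho>"
  obtains B where "\<And>j. norm ((deriv ^^ j) f 0 / fact j) \<le> B * (1 / r) ^ j"
proof -
  have cont: "continuous_on (cball 0 r) f"
    using r by (intro holomorphic_on_imp_continuous_on holomorphic_on_subset[OF holo]) auto
  obtain B where B: "\<And>z. z \<in> cball 0 r \<Longrightarrow> norm (f z) \<le> B"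
    using continuous_on_compact_bound[OF compact_cball cont] by blast
  have holo_r: "f holomorphic_on ball 0 r"
    using r by (intro holomorphic_on_subset[OF holo]) auto
  have "norm ((deriv ^^ j) f 0) \<le> fact j * B / r ^ j" for j
    using B r(1) by (intro Cauchy_inequality[OF holo_r cont]) auto
  then have "norm ((deriv ^^ j) f 0 / fact j) \<le> B * (1 / r) ^ j" for j
    using r by (simp add: norm_divide field_simps)
  then show ?thesis
    by (rule that)
qed

context qbase
begin

lemma sum_norm_q_pow_Suc_le: "(\<Sum>l<i. norm q ^ Suc l) \<le> 1 / (1 - norm q)"
proof -
  have "(\<Sum>l<i. norm q ^ Suc l) \<le> (\<Sum>l<Suc i. norm q ^ l)"
    by (simp only: sum.lessThan_Suc_shift) simp
  also have "\<dots> \<le> (\<Sum>l. norm q ^ l)"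
    by (intro sum_le_suminf summable_norm_q_pow) auto
  finally show ?thesis
    using suminf_norm_q_pow by simp
qed

lemma prod_one_plus_norm_q_pow_le: "(\<Prod>i<n. 1 + norm q ^ i) \<le> exp (1 / (1 - norm q))"
proof -
  have "(\<Prod>i<n. 1 + norm q ^ i) \<le> (\<Prod>i<n. exp (norm q ^ i))"
    by (intro prod_mono) (auto simp: add.commute exp_ge_add_one_self)
  also have "\<dots> = exp (\<Sum>i<n. norm q ^ i)"
    by (simp add: exp_sum)
  also have "(\<Sum>i<n. norm q ^ i) \<le> (\<Sum>i. norm q ^ i)"
    by (intro sum_le_suminf summable_norm_q_pow) auto
  finally show ?thesis
    using suminf_norm_q_pow by simp
qed

lemma prod_one_minus_norm_q_pow_ge:
  "exp (- (1 / (1 - norm q) ^ 2)) \<le> (\<Prod>l<i. 1 - norm q ^ Suc l)"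
proof -
  have q_pow: "norm q ^ Suc l \<le> norm q" "norm q ^ Suc l < 1" for l
    using norm_q_less_1 q_nonzero by (simp_all add: mult_left_le power_less_one_iff)
  have "exp (- (1 / (1 - norm q) ^ 2)) \<le> exp (- ((\<Sum>l<i. norm q ^ Suc l) / (1 - norm q)))"
    using divide_right_mono[OF sum_norm_q_pow_Suc_le, of "1 - norm q"] norm_q_less_1
    by (simp add: power2_eq_square)
  also have "\<dots> = (\<Prod>l<i. exp (- (norm q ^ Suc l / (1 - norm q))))"
    by (simp add: exp_sum[symmetric] sum_negf sum_divide_distrib)
  also have "\<dots> \<le> (\<Prod>l<i. 1 - norm q ^ Suc l)"
  proof (intro prod_mono conjI)
    fix l
    have "exp (- (norm q ^ Suc l / (1 - norm q))) \<le> exp (- (norm q ^ Suc l / (1 - norm q ^ Suc l)))"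
      using q_pow[of l] norm_q_less_1 by (auto intro!: divide_left_mono mult_pos_pos)
    also have "\<dots> \<le> 1 - norm q ^ Suc l"
      using q_pow[of l] by (intro exp_neg_le_one_minus) auto
    finally show "exp (- (norm q ^ Suc l / (1 - norm q))) \<le> 1 - norm q ^ Suc l" .
  qed auto
  finally show ?thesis .
qed

lemma norm_qpoch_q_ge: "exp (- (1 / (1 - norm q) ^ 2)) \<le> norm (qpoch q q i)"
proof -
  have "(\<Prod>l<i. 1 - norm q ^ Suc l) \<le> norm (qpoch q q i)"
    unfolding qpoch_def prod_norm[symmetric]
  proof (intro prod_mono conjI)
    fix l
    show "0 \<le> 1 - norm q ^ Suc l"
      using norm_q_pow_le_1[of "Suc l"] by linarith
    show "1 - norm q ^ Suc l \<le> norm (1 - q * q ^ l)"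
      using norm_triangle_ineq2[of 1 "q * q ^ l"] by (simp add: norm_mult norm_power)
  qed
  then show ?thesis
    using prod_one_minus_norm_q_pow_ge by (rule order.trans[rotated])
qed

lemma norm_qstirling_le_prod: "norm (qstirling q j i) * (\<Prod>l<i. 1 - norm q ^ Suc l) \<le> 1"
proof (induction j arbitrary: i)
  case 0
  then show ?case by simp
next
  case (Suc j)
  show ?case
  proof (cases i)
    case 0
    then show ?thesis using Suc[of 0] by simp
  next
    case (Suc i')
    define P where "P = (\<Prod>l<i'. 1 - norm q ^ Suc l)"
    define d where "d = 1 - norm q ^ i"
    have "0 < d"
      using norm_q_less_1 q_nonzero Suc by (simp add: d_def power_less_one_iff)
    have "0 \<le> P"
      unfolding P_def by (intro prod_nonneg) (simp add: less_imp_le)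
    have "norm (qstirling q (Suc j) i) * (P * d) \<le> (norm (qstirling q j i') + norm q ^ i * norm (qstirling q j i)) * (P * d)"
      using Suc \<open>0 < d\<close> \<open>0 \<le> P\<close>
      by (intro mult_right_mono) (auto simp: norm_mult norm_power intro: order.trans[OF norm_triangle_ineq])
    also have "\<dots> = d * (norm (qstirling q j i') * P) + norm q ^ i * (norm (qstirling q j i) * (P * d))"
      by (simp add: algebra_simps)
    also have "\<dots> \<le> d * 1 + norm q ^ i * 1"
      using Suc.IH[of i'] Suc.IH[of i] \<open>0 < d\<close> Suc
      by (intro add_mono mult_left_mono) (auto simp: P_def d_def mult_ac less_imp_le)
    finally show ?thesis
      using Suc by (simp add: P_def d_def)
  qed
qed

lemma norm_qstirling_le: "norm (qstirling q j i) \<le> exp (1 / (1 - norm q) ^ 2)"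
proof -
  have "0 < exp (- (1 / (1 - norm q) ^ 2))"
    by simp
  then have "norm (qstirling q j i) * exp (- (1 / (1 - norm q) ^ 2)) \<le> 1"
    using norm_qstirling_le_prod[of j i] prod_one_minus_norm_q_pow_ge[of i]
    by (meson mult_left_mono norm_ge_zero order.trans)
  then show ?thesis
    by (simp add: exp_minus field_simps)
qed

lemma norm_qpoch_inverse_pow_le:
  assumes "i \<le> m"
  shows "norm q ^ (m * i) * norm (qpoch (inverse (q ^ m)) q i) \<le> norm q ^ triangular i * exp (1 / (1 - norm q))"
proof -
  have "norm q ^ (m * i) * norm (qpoch (inverse (q ^ m)) q i) = (\<Prod>p<i. norm (q ^ m) * norm (1 - inverse (q ^ m) * q ^ p))"
    by (simp add: qpoch_def prod_norm norm_power power_mult prod.distrib)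
  also have "\<dots> = (\<Prod>p<i. norm (q ^ m - q ^ p))"
    using q_nonzero by (intro prod.cong refl) (simp add: norm_mult[symmetric] right_diff_distrib mult.assoc[symmetric])
  also have "\<dots> \<le> (\<Prod>p<i. norm q ^ p * (1 + norm q ^ (i - Suc p)))"
  proof (intro prod_mono conjI)
    fix p assume "p \<in> {..<i}"
    then have "norm q ^ m = norm q ^ p * norm q ^ (m - p)" "norm q ^ (m - p) \<le> norm q ^ (i - Suc p)"
      using assms norm_q_less_1 by (auto simp flip: power_add intro: power_decreasing)
    then have "norm q ^ m \<le> norm q ^ p * norm q ^ (i - Suc p)"
      by (simp add: mult_left_mono)
    moreover have "norm (q ^ m - q ^ p) \<le> norm q ^ m + norm q ^ p"
      by (metis norm_power norm_triangle_ineq4)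
    ultimately show "norm (q ^ m - q ^ p) \<le> norm q ^ p * (1 + norm q ^ (i - Suc p))"
      by (simp add: distrib_left)
  qed auto
  also have "\<dots> = norm q ^ triangular i * (\<Prod>p<i. 1 + norm q ^ p)"
    using prod.nat_diff_reindex[of "\<lambda>p. 1 + norm q ^ p" i]
    by (simp add: prod.distrib triangular_def power_sum)
  also have "\<dots> \<le> norm q ^ triangular i * exp (1 / (1 - norm q))"
    by (intro mult_left_mono prod_one_plus_norm_q_pow_le) auto
  finally show ?thesis .
qed

lemma qtransform_node_prod_explicit:
  assumes "i \<le> m"
  shows "qtransform q a (\<lambda>k. node_prod q i (q ^ k)) m
         = (-1) ^ i * q ^ (triangular i + i) * qpoch (inverse (q ^ m)) q i * qpoch (a * q ^ m) q i
           * (a * q ^ (m + i)) ^ (m - i)"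
proof -
  have "node_prod q i (q ^ i) * q ^ i / qpoch q q i = (-1) ^ i * q ^ (triangular i + i)"
    using qpoch_q_nonzero[of i] by (simp add: node_prod_diag power_add)
  then show ?thesis
    using assms by (simp add: qtransform_node_prod)
qed

lemma norm_qtransform_node_prod_le:
  assumes "i \<le> m"
  shows "norm (qtransform q a (\<lambda>k. node_prod q i (q ^ k)) m)
         \<le> exp (1 / (1 - norm q)) * exp (norm a / (1 - norm q)) * (norm a * norm q ^ m) ^ (m - i)"
proof -
  define E1 where "E1 = exp (1 / (1 - norm q))"
  define E2 where "E2 = exp (norm a / (1 - norm q))"
  have bound2: "norm (qpoch (a * q ^ m) q i) \<le> E2"
  proof -
    have "norm (a * q ^ m) \<le> norm a"
      by (simp add: norm_mult norm_power mult_left_le)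
    then have "exp (norm (a * q ^ m) / (1 - norm q)) \<le> E2"
      unfolding E2_def using norm_q_less_1 by (simp add: divide_right_mono)
    then show ?thesis
      using norm_qpoch_le_exp by (rule order.trans[rotated])
  qed
  have exponent: "2 * triangular i + i + (m + i) * (m - i) = m * i + m * (m - i)"
  proof -
    obtain d where "m = i + d"
      using assms by (metis le_add_diff_inverse)
    then show ?thesis
      using double_triangular[of i] by (simp add: algebra_simps)
  qed
  have "norm ((a * q ^ (m + i)) ^ (m - i)) = norm a ^ (m - i) * norm q ^ ((m + i) * (m - i))"
    by (simp add: norm_mult norm_power power_mult_distrib power_mult)
  moreover have "norm ((-1) ^ i * q ^ (triangular i + i)) = norm q ^ (triangular i + i)"
    by (simp add: norm_mult norm_power)
  ultimately have "norm q ^ (m * i) * norm (qtransform q a (\<lambda>k. node_prod q i (q ^ k)) m)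
        = norm q ^ (triangular i + i) * (norm q ^ (m * i) * norm (qpoch (inverse (q ^ m)) q i))
          * norm (qpoch (a * q ^ m) q i) * (norm a ^ (m - i) * norm q ^ ((m + i) * (m - i)))"
    unfolding qtransform_node_prod_explicit[OF assms] norm_mult by (simp only: mult_ac)
  also have "\<dots> \<le> norm q ^ (triangular i + i) * (norm q ^ triangular i * E1) * E2
                   * (norm a ^ (m - i) * norm q ^ ((m + i) * (m - i)))"
    unfolding E1_def
    by (intro mult_mono norm_qpoch_inverse_pow_le[OF assms] bound2 mult_left_mono) (auto simp: E2_def)
  also have "\<dots> = norm q ^ (m * i) * (E1 * E2 * (norm a * norm q ^ m) ^ (m - i))"
  proof -
    have "norm q ^ (triangular i + i) * norm q ^ triangular i * norm q ^ ((m + i) * (m - i))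
          = norm q ^ (m * i) * norm q ^ (m * (m - i))"
      using exponent by (simp add: mult_2 add_ac flip: power_add)
    then show ?thesis
      by (simp add: power_mult_distrib power_mult[symmetric] mult_ac)
  qed
  finally show ?thesis
    using q_nonzero by (simp add: E1_def E2_def mult_le_cancel_left_pos)
qed

lemma qtransform_power:
  "qtransform q a (\<lambda>k. (q ^ k) ^ j) m = (\<Sum>i\<le>m. qstirling q j i * qtransform q a (\<lambda>k. node_prod q i (q ^ k)) m)"
proof -
  have "qtransform q a (\<lambda>k. (q ^ k) ^ j) m = (\<Sum>i\<le>j. qstirling q j i * qtransform q a (\<lambda>k. node_prod q i (q ^ k)) m)"
    unfolding qtransform_def power_eq_sum_qstirling[of _ j q] sum_distrib_left
    by (subst sum.swap) (simp add: mult_ac)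
  also have "\<dots> = (\<Sum>i\<le>max j m. qstirling q j i * qtransform q a (\<lambda>k. node_prod q i (q ^ k)) m)"
    by (intro sum.mono_neutral_left) (auto simp: qstirling_eq_0)
  also have "\<dots> = (\<Sum>i\<le>m. qstirling q j i * qtransform q a (\<lambda>k. node_prod q i (q ^ k)) m)"
    by (intro sum.mono_neutral_right) (auto simp: qtransform_node_prod)
  finally show ?thesis .
qed

lemma qstirling_series_bound:
  fixes c :: "nat \<Rightarrow> complex"
  assumes coeff: "\<And>j. norm (c j) \<le> B * r ^ j" and r: "0 \<le> r" "r < 1"
  shows "summable (\<lambda>j. c j * qstirling q j i)"
    and "norm (\<Sum>j. c j * qstirling q j i) \<le> B * exp (1 / (1 - norm q) ^ 2) * (r ^ i / (1 - r))"
proof -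
  define S where "S = exp (1 / (1 - norm q) ^ 2)"
  have "0 \<le> B"
    using order.trans[OF norm_ge_zero coeff[of 0]] by simp
  have term_le: "norm (c j * qstirling q j i) \<le> (if i \<le> j then B * S * r ^ j else 0)" for j
  proof -
    have "norm (c j) * norm (qstirling q j i) \<le> (B * r ^ j) * S"
      using coeff[of j] norm_qstirling_le[of j i] \<open>0 \<le> B\<close> r by (intro mult_mono) (auto simp: S_def)
    then show ?thesis
      by (auto simp: norm_mult qstirling_eq_0 mult_ac)
  qed
  have tail: "(\<lambda>j. if i \<le> j then B * S * r ^ j else 0) sums (B * S * (r ^ i / (1 - r)))"
    using sums_mult[OF geometric_tail_sums[of r i], of "B * S"] r by (simp add: if_distrib cong: if_cong)
  show "summable (\<lambda>j. c j * qstirling q j i)"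
    by (rule summable_comparison_test'[OF sums_summable[OF tail] term_le])
  show "norm (\<Sum>j. c j * qstirling q j i) \<le> B * S * (r ^ i / (1 - r))"
    using norm_suminf_le[OF term_le sums_summable[OF tail]] tail by (simp add: sums_iff)
qed

lemma qtransform_power_series:
  assumes sums: "\<And>k. (\<lambda>j. c j * (q ^ k) ^ j) sums F k"
    and summable: "\<And>i. summable (\<lambda>j. c j * qstirling q j i)"
  shows "qtransform q a F m
         = (\<Sum>i\<le>m. qtransform q a (\<lambda>k. node_prod q i (q ^ k)) m * (\<Sum>j. c j * qstirling q j i))"
proof (rule sums_unique2)
  show "(\<lambda>j. qtransform q a (\<lambda>k. c j * (q ^ k) ^ j) m) sums qtransform q a F m"
    by (rule qtransform_sums[OF sums])
  have "qtransform q a (\<lambda>k. c j * (q ^ k) ^ j) m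
        = (\<Sum>i\<le>m. qtransform q a (\<lambda>k. node_prod q i (q ^ k)) m * (c j * qstirling q j i))" for j
    by (simp add: qtransform_cmult qtransform_power sum_distrib_left mult_ac)
  moreover have "(\<lambda>j. \<Sum>i\<le>m. qtransform q a (\<lambda>k. node_prod q i (q ^ k)) m * (c j * qstirling q j i))
      sums (\<Sum>i\<le>m. qtransform q a (\<lambda>k. node_prod q i (q ^ k)) m * (\<Sum>j. c j * qstirling q j i))"
    by (intro sums_sum sums_mult summable_sums summable)
  ultimately show "(\<lambda>j. qtransform q a (\<lambda>k. c j * (q ^ k) ^ j) m)
      sums (\<Sum>i\<le>m. qtransform q a (\<lambda>k. node_prod q i (q ^ k)) m * (\<Sum>j. c j * qstirling q j i))"
    by simp
qed

lemma norm_qtransform_le: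
  assumes sums: "\<And>k. (\<lambda>j. c j * (q ^ k) ^ j) sums F k"
    and coeff: "\<And>j. norm (c j) \<le> B * r ^ j" and r: "0 < r" "r < 1"
    and small: "norm a * norm q ^ m \<le> r / 2"
  shows "norm (qtransform q a F m) \<le> 2 * B * exp (1 / (1 - norm q)) * exp (norm a / (1 - norm q))
                                        * exp (1 / (1 - norm q) ^ 2) / (1 - r) * r ^ m"
proof -
  define E where "E = exp (1 / (1 - norm q)) * exp (norm a / (1 - norm q))"
  define S where "S = exp (1 / (1 - norm q) ^ 2)"
  define T where "T i = qtransform q a (\<lambda>k. node_prod q i (q ^ k)) m" for i
  define d where "d i = (\<Sum>j. c j * qstirling q j i)" for i
  note d_bound = qstirling_series_bound[OF coeff less_imp_le[OF r(1)] r(2), folded d_def S_def]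
  have "0 \<le> B"
    using order.trans[OF norm_ge_zero coeff[of 0]] by simp
  have "norm (qtransform q a F m) = norm (\<Sum>i\<le>m. T i * d i)"
    using qtransform_power_series[OF sums d_bound(1)] by (simp add: T_def d_def)
  also have "\<dots> \<le> (\<Sum>i\<le>m. E * (r / 2) ^ (m - i) * (B * S * (r ^ i / (1 - r))))"
  proof (intro order.trans[OF norm_sum] sum_mono)
    fix i assume "i \<in> {..m}"
    have "(norm a * norm q ^ m) ^ (m - i) \<le> (r / 2) ^ (m - i)"
      using small by (intro power_mono) auto
    then have "E * (norm a * norm q ^ m) ^ (m - i) \<le> E * (r / 2) ^ (m - i)"
      by (rule mult_left_mono) (simp add: E_def)
    moreover have "norm (T i) \<le> E * (norm a * norm q ^ m) ^ (m - i)"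
      using norm_qtransform_node_prod_le[of i m a] \<open>i \<in> {..m}\<close> by (simp add: T_def E_def)
    ultimately have "norm (T i) \<le> E * (r / 2) ^ (m - i)"
      by (rule order.trans[rotated])
    then show "norm (T i * d i) \<le> E * (r / 2) ^ (m - i) * (B * S * (r ^ i / (1 - r)))"
      unfolding norm_mult using d_bound(2) r by (intro mult_mono) (auto simp: E_def)
  qed
  also have "\<dots> = (\<Sum>i\<le>m. E * B * S / (1 - r) * r ^ m * (1 / 2) ^ (m - i))"
  proof (intro sum.cong refl)
    fix i assume "i \<in> {..m}"
    then have "r ^ (m - i) * r ^ i = r ^ m"
      by (simp flip: power_add)
    then show "E * (r / 2) ^ (m - i) * (B * S * (r ^ i / (1 - r))) = E * B * S / (1 - r) * r ^ m * (1 / 2) ^ (m - i)"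
      by (simp add: power_divide field_simps)
  qed
  also have "\<dots> = E * B * S / (1 - r) * r ^ m * (\<Sum>i\<le>m. (1 / 2) ^ (m - i))"
    by (simp add: sum_distrib_left)
  also have "\<dots> \<le> E * B * S / (1 - r) * r ^ m * 2"
    using \<open>0 \<le> B\<close> r by (intro mult_left_mono sum_half_pow_rev_le) (auto simp: E_def S_def)
  finally show ?thesis
    by (simp add: E_def S_def mult_ac)
qed

lemma qtransform_eventually_le:
  assumes holo: "f holomorphic_on ball 0 \<rho>" and r: "1 < r" "r < \<rho>"
  obtains K where "\<forall>\<^sub>F m in sequentially. norm (qtransform q a (\<lambda>k. f (q ^ k)) m) \<le> K * (1 / r) ^ m"
proof -
  define c where "c j = (deriv ^^ j) f 0 / fact j" for j
  have "0 < r"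
    using r by simp
  then obtain B where B: "\<And>j. norm (c j) \<le> B * (1 / r) ^ j"
    using taylor_coeff_bound[OF holo _ r(2)] unfolding c_def by blast
  have "q ^ k \<in> ball 0 \<rho>" for k
    using r norm_q_pow_le_1[of k] by (simp add: norm_power del: norm_q_pow_le_1)
  then have sums: "(\<lambda>j. c j * (q ^ k) ^ j) sums f (q ^ k)" for k
    using holomorphic_power_series[OF holo] unfolding c_def by simp
  have "(\<lambda>m. norm a * norm q ^ m) \<longlonglongrightarrow> 0"
    using norm_q_less_1 by (intro tendsto_mult_right_zero LIMSEQ_power_zero) auto
  then have "\<forall>\<^sub>F m in sequentially. norm a * norm q ^ m < (1 / r) / 2"
    using r by (intro order_tendstoD(2)) auto
  then have "\<forall>\<^sub>F m in sequentially. norm a * norm q ^ m \<le> (1 / r) / 2"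
    by (rule eventually_mono) simp
  then have "\<forall>\<^sub>F m in sequentially. norm (qtransform q a (\<lambda>k. f (q ^ k)) m)
      \<le> 2 * B * exp (1 / (1 - norm q)) * exp (norm a / (1 - norm q)) * exp (1 / (1 - norm q) ^ 2)
          / (1 - 1 / r) * (1 / r) ^ m"
    using r by (elim eventually_mono) (rule norm_qtransform_le[OF sums B]; auto)
  then show ?thesis
    by (rule that)
qed

end

section \<open>Liu's expansion theorem\<close>

lemma sum_atMost_add_split:
  fixes f :: "nat \<Rightarrow> 'a::comm_monoid_add"
  shows "(\<Sum>n\<le>K + k. f n) = (\<Sum>n<K. f n) + (\<Sum>m\<le>k. f (K + m))"
  by (induction k) (simp_all add: lessThan_Suc_atMost[symmetric] add_ac)

context qbase
begin

lemma norm_wp_coeff_le: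
  assumes "a \<noteq> 1"
  shows "norm (wp_coeff q a m)
         \<le> (1 + norm a) * exp (norm a / (1 - norm q)) * exp (1 / (1 - norm q) ^ 2) / norm (1 - a)"
proof -
  have "norm a * norm q ^ (2 * m) \<le> norm a"
    by (simp add: mult_left_le)
  then have "norm (1 - a * q ^ (2 * m)) \<le> 1 + norm a"
    using norm_triangle_ineq4[of 1 "a * q ^ (2 * m)"] by (simp add: norm_mult norm_power)
  moreover have "1 / norm (qpoch q q m) \<le> exp (1 / (1 - norm q) ^ 2)"
    using norm_qpoch_q_ge[of m] qpoch_q_nonzero[of m] by (simp add: exp_minus field_simps)
  ultimately have "norm (1 - a * q ^ (2 * m)) * norm (qpoch a q m) * (1 / norm (qpoch q q m))
        \<le> (1 + norm a) * exp (norm a / (1 - norm q)) * exp (1 / (1 - norm q) ^ 2)"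
    by (intro mult_mono norm_qpoch_le_exp) auto
  moreover have "norm (wp_coeff q a m)
      = norm (1 - a * q ^ (2 * m)) * norm (qpoch a q m) * (1 / norm (qpoch q q m)) / norm (1 - a)"
    by (simp add: wp_coeff_def norm_mult norm_divide)
  ultimately show ?thesis
    by (metis divide_right_mono norm_ge_zero)
qed

lemma norm_node_prod_le:
  assumes "norm z \<le> R" "1 \<le> R"
  shows "norm (node_prod q m z) \<le> R ^ m * exp (1 / (1 - norm q))"
proof -
  have "norm (node_prod q m z) \<le> (\<Prod>i<m. R * (1 + norm q ^ i))"
    unfolding node_prod_def prod_norm[symmetric]
  proof (intro prod_mono conjI)
    fix i
    have "norm q ^ i \<le> R * norm q ^ i"
      using assms by (simp add: mult_le_cancel_right1)
    then show "norm (z - q ^ i) \<le> R * (1 + norm q ^ i)"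
      using norm_triangle_ineq4[of z "q ^ i"] assms by (simp add: norm_power algebra_simps)
  qed simp
  also have "\<dots> = R ^ m * (\<Prod>i<m. 1 + norm q ^ i)"
    by (simp add: prod.distrib)
  also have "\<dots> \<le> R ^ m * exp (1 / (1 - norm q))"
    using assms by (intro mult_left_mono prod_one_plus_norm_q_pow_le) auto
  finally show ?thesis .
qed

lemma norm_expansion_basis_le:
  assumes "norm z \<le> R" "1 \<le> R"
  shows "norm (expansion_basis q a m z) \<le> R ^ m * exp (1 / (1 - norm q)) * exp (norm a * R / (1 - norm q))"
proof -
  have "norm q ^ Suc m * norm z \<le> 1 * R"
    using assms by (intro mult_mono) (auto simp del: power_Suc)
  then have "norm (a * q ^ Suc m * z) \<le> norm a * R"
    by (simp add: norm_mult norm_power mult_left_mono mult.assoc del: power_Suc)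
  then have "norm (qpoch_inf (a * q ^ Suc m * z) q) \<le> exp (norm a * R / (1 - norm q))"
    using norm_q_less_1 by (intro order.trans[OF norm_qpoch_inf_le_exp]) (simp add: divide_right_mono)
  then show ?thesis
    using assms unfolding expansion_basis_def norm_mult
    by (intro mult_mono norm_node_prod_le) auto
qed

lemma holomorphic_expansion_term [holomorphic_intros]:
  "f holomorphic_on S \<Longrightarrow> (\<lambda>z. expansion_term q a B n (f z)) holomorphic_on S"
  unfolding expansion_term_def expansion_basis_def node_prod_def by (intro holomorphic_intros)

lemma expansion_term_node_eq_0: "k < n \<Longrightarrow> expansion_term q a B n (q ^ k) = 0"
  by (simp add: expansion_term_def expansion_basis_def node_prod_node_eq_0)

lemma expansion_at_node_sums:
  assumes "a \<noteq> 1"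
  shows "(\<lambda>n. expansion_term q a B n (q ^ k)) sums (qpoch_inf (a * q) q * B k)"
  using sums_finite[of "{..k}" "\<lambda>n. expansion_term q a B n (q ^ k)"] expansion_term_node_eq_0
  by (simp add: expansion_at_nodes[OF assms])

lemma zero_islimpt_nodes:
  assumes "0 < r"
  shows "0 islimpt (range (\<lambda>k. q ^ k) \<inter> ball 0 r)"
proof -
  obtain K where K: "norm q ^ K < r"
    using real_arch_pow_inv[OF assms norm_q_less_1] by blast
  have lim: "(\<lambda>n. q ^ (Suc n + K)) \<longlonglongrightarrow> 0"
    using LIMSEQ_ignore_initial_segment[OF LIMSEQ_Suc[OF LIMSEQ_power_zero[OF norm_q_less_1]], of K] by simp
  have mem: "q ^ (Suc n + K) \<in> (range (\<lambda>k. q ^ k) \<inter> ball 0 r) - {0}" for n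
  proof -
    have "norm q ^ (Suc n + K) \<le> norm q ^ K"
      using norm_q_less_1 by (intro power_decreasing) auto
    then show ?thesis
      using K q_nonzero by (auto simp: norm_power simp del: power_Suc)
  qed
  show ?thesis
    unfolding islimpt_sequential by (rule exI[of _ "\<lambda>n. q ^ (Suc n + K)"]) (use lim mem in simp)
qed

lemma eq_0_if_eq_0_at_nodes:
  assumes "h holomorphic_on ball 0 r" and "0 < r" and "\<And>k. norm q ^ k < r \<Longrightarrow> h (q ^ k) = 0"
    and "s \<in> ball 0 r"
  shows "h s = 0"
proof (rule analytic_continuation[OF assms(1)])
  show "0 islimpt range (\<lambda>k. q ^ k) \<inter> ball 0 r"
    using assms(2) by (rule zero_islimpt_nodes)
  show "h z = 0" if "z \<in> range (\<lambda>k. q ^ k) \<inter> ball 0 r" for z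
    using that assms(3) by (auto simp: norm_power)
  show "open (ball (0::complex) r)" "connected (ball (0::complex) r)" "0 \<in> ball (0::complex) r"
    using assms(2) by auto
qed (use assms(4) in auto)

lemma uniform_limit_expansion:
  assumes "a \<noteq> 1"
    and bound: "\<forall>\<^sub>F m in sequentially. norm (qtransform q a B m) \<le> K * (1 / r) ^ m"
    and R: "1 \<le> R" "R < r"
  shows "uniform_limit (cball 0 R) (\<lambda>n z. \<Sum>i<n. expansion_term q a B i z)
           (\<lambda>z. \<Sum>i. expansion_term q a B i z) sequentially"
proof (rule Weierstrass_m_test_ev)
  define Ca where "Ca = (1 + norm a) * exp (norm a / (1 - norm q)) * exp (1 / (1 - norm q) ^ 2) / norm (1 - a)"
  define Cp where "Cp = exp (1 / (1 - norm q)) * exp (norm a * R / (1 - norm q))"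
  have "0 \<le> Ca" "0 \<le> Cp"
    by (simp_all add: Ca_def Cp_def)
  show "\<forall>\<^sub>F n in sequentially. \<forall>z\<in>cball 0 R. norm (expansion_term q a B n z) \<le> Ca * \<bar>K\<bar> * Cp * (R / r) ^ n"
    using bound
  proof (elim eventually_mono, intro ballI)
    fix n and z :: complex assume T: "norm (qtransform q a B n) \<le> K * (1 / r) ^ n" and "z \<in> cball 0 R"
    then have "norm (expansion_basis q a n z) \<le> R ^ n * Cp"
      using norm_expansion_basis_le[of z R a n] R by (simp add: Cp_def mult.assoc)
    moreover have "norm (qtransform q a B n) \<le> \<bar>K\<bar> * (1 / r) ^ n"
      using T R by (simp add: order.trans[OF _ mult_right_mono])
    ultimately have "norm (expansion_term q a B n z) \<le> Ca * (\<bar>K\<bar> * (1 / r) ^ n) * (R ^ n * Cp)"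
      unfolding expansion_term_def norm_mult using \<open>0 \<le> Ca\<close> R
      by (intro mult_mono norm_wp_coeff_le[OF assms(1), folded Ca_def]) auto
    then show "norm (expansion_term q a B n z) \<le> Ca * \<bar>K\<bar> * Cp * (R / r) ^ n"
      by (simp add: power_divide field_simps)
  qed
  show "summable (\<lambda>n. Ca * \<bar>K\<bar> * Cp * (R / r) ^ n)"
    using R by (intro summable_mult summable_geometric) auto
qed

lemma expansion_generic:
  assumes generic: "\<And>j. a * q ^ j \<noteq> 1" and holo: "f holomorphic_on ball 0 \<rho>" and "1 < \<rho>"
    and s: "s \<in> ball 0 \<rho>"
  shows "(\<lambda>n. expansion_term q a (\<lambda>k. f (q ^ k)) n s) sums (qpoch_inf (a * q) q * f s)"
proof -
  define B where "B k = f (q ^ k)" for k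
  define M where "M = max 1 (norm s)"
  define r where "r = (M + \<rho>) / 2"
  define R where "R = (M + r) / 2"
  have "1 \<le> M" "norm s \<le> M" "M < \<rho>"
    using s \<open>1 < \<rho>\<close> by (auto simp: M_def)
  then have R: "1 \<le> R" "norm s < R" "R < r" "r < \<rho>"
    unfolding r_def R_def by (simp_all add: field_simps)
  then have "1 < r"
    by simp
  then obtain K where "\<forall>\<^sub>F m in sequentially. norm (qtransform q a B m) \<le> K * (1 / r) ^ m"
    using qtransform_eventually_le[OF holo _ R(4), of a] unfolding B_def by blast
  then have lim: "uniform_limit (cball 0 R) (\<lambda>n z. \<Sum>i<n. expansion_term q a B i z)
                   (\<lambda>z. \<Sum>i. expansion_term q a B i z) sequentially"
    using generic[of 0] R by (intro uniform_limit_expansion) auto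
  have sums: "(\<lambda>i. expansion_term q a B i z) sums (\<Sum>i. expansion_term q a B i z)" if "z \<in> cball 0 R" for z
    unfolding sums_def using tendsto_uniform_limitI[OF lim that] .
  have "\<forall>\<^sub>F n in sequentially. continuous_on (cball 0 R) (\<lambda>z. \<Sum>i<n. expansion_term q a B i z)
                              \<and> (\<lambda>z. \<Sum>i<n. expansion_term q a B i z) holomorphic_on ball 0 R"
    by (intro always_eventually allI conjI holomorphic_on_imp_continuous_on holomorphic_intros)
  then have "(\<lambda>z. \<Sum>i. expansion_term q a B i z) holomorphic_on ball 0 R"
    using holomorphic_uniform_limit[OF _ lim trivial_limit_sequentially] by blast
  then have h: "(\<lambda>z. (\<Sum>i. expansion_term q a B i z) - qpoch_inf (a * q) q * f z) holomorphic_on ball 0 R"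
    using R by (intro holomorphic_intros holomorphic_on_subset[OF holo]) auto
  have nodes: "(\<Sum>i. expansion_term q a B i (q ^ k)) - qpoch_inf (a * q) q * f (q ^ k) = 0" for k
    using expansion_at_node_sums[of a B k] generic[of 0] by (simp add: sums_iff B_def)
  have "(\<Sum>i. expansion_term q a B i s) - qpoch_inf (a * q) q * f s = 0"
    by (rule eq_0_if_eq_0_at_nodes[OF h _ nodes]) (use R in auto)
  moreover have "(\<lambda>k. f (q ^ k)) = B"
    by (simp add: B_def fun_eq_iff)
  ultimately show ?thesis
    using sums[of s] R by simp
qed

lemma node_prod_node_nonzero: "K \<le> m \<Longrightarrow> node_prod q K (q ^ m) \<noteq> 0"
  using node_prod_node[of K m] qpoch_q_nonzero q_nonzero by auto

lemma expansion_basis_diag_nonzero: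
  assumes "\<And>j. a * q ^ j \<noteq> 1"
  shows "expansion_basis q a k (q ^ k) \<noteq> 0"
proof -
  have "a * q ^ Suc k * q ^ k * q ^ i \<noteq> 1" for i
    using assms[of "Suc k + k + i"] by (simp add: power_add mult.assoc)
  then show ?thesis
    using node_prod_diag_nonzero[of k] by (simp add: expansion_basis_def qpoch_inf_eq_0_iff)
qed

lemma expansion_basis_shift:
  "expansion_basis q a (K + m) s = node_prod q K s * q ^ (K * m) * expansion_basis q (a * q ^ (2 * K)) m (s / q ^ K)"
proof -
  have "(\<Prod>i<m. s - q ^ (K + i)) = (\<Prod>i<m. q ^ K * (s / q ^ K - q ^ i))"
    using q_nonzero by (intro prod.cong refl) (simp add: field_simps power_add)
  then have "(\<Prod>i<m. s - q ^ (K + i)) = q ^ (K * m) * node_prod q m (s / q ^ K)"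
    by (simp add: prod.distrib node_prod_def power_mult)
  moreover have "a * q ^ Suc (K + m) * s = a * q ^ (2 * K) * q ^ Suc m * (s / q ^ K)"
  proof -
    have "q ^ (2 * K) = q ^ K * q ^ K"
      by (simp add: mult_2 power_add)
    then show ?thesis
      using q_nonzero by (simp add: field_simps power_add)
  qed
  ultimately show ?thesis
    unfolding expansion_basis_def node_prod_add by (simp add: mult_ac)
qed

(*
  Beyond index K, the coefficients of the expansion with parameter a are those with parameter
  a q^(2K) for the values V k, which are those of the function with the first K nodes divided off.
*)
lemma shifted_expansion_coeffs:
  assumes generic: "\<And>j. a * q ^ j \<noteq> 1"
    and V: "\<And>k. node_prod q K (q ^ (K + k)) * qpoch_inf (a * q ^ (2 * K) * q) q * V k
               = qpoch_inf (a * q) q * B (K + k) - (\<Sum>n<K. expansion_term q a B n (q ^ (K + k)))"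
  shows "wp_coeff q a (K + m) * qtransform q a B (K + m) * q ^ (K * m)
         = wp_coeff q (a * q ^ (2 * K)) m * qtransform q (a * q ^ (2 * K)) V m"
proof (rule triangular_system_unique[where D = "\<lambda>k m. expansion_basis q (a * q ^ (2 * K)) m (q ^ k)"])
  define a' where "a' = a * q ^ (2 * K)"
  have generic': "a' * q ^ j \<noteq> 1" for j
    using generic[of "2 * K + j"] by (simp add: a'_def power_add mult.assoc)
  show "expansion_basis q (a * q ^ (2 * K)) k (q ^ k) \<noteq> 0" for k
    using expansion_basis_diag_nonzero[OF generic'] by (simp add: a'_def)
  fix k
  have shift: "expansion_term q a B (K + m) (q ^ (K + k)) = node_prod q K (q ^ (K + k))
      * (expansion_basis q a' m (q ^ k) * (wp_coeff q a (K + m) * qtransform q a B (K + m) * q ^ (K * m)))" for m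
    using q_nonzero by (simp add: expansion_term_def expansion_basis_shift a'_def power_add mult_ac)
  have "node_prod q K (q ^ (K + k))
        * (\<Sum>m\<le>k. expansion_basis q a' m (q ^ k) * (wp_coeff q a (K + m) * qtransform q a B (K + m) * q ^ (K * m)))
        = (\<Sum>m\<le>k. expansion_term q a B (K + m) (q ^ (K + k)))"
    by (simp add: shift sum_distrib_left)
  also have "\<dots> = qpoch_inf (a * q) q * B (K + k) - (\<Sum>n<K. expansion_term q a B n (q ^ (K + k)))"
    using expansion_at_nodes_generic[OF generic, of B "K + k"] by (simp add: sum_atMost_add_split algebra_simps)
  also have "\<dots> = node_prod q K (q ^ (K + k)) * (\<Sum>m\<le>k. expansion_term q a' V m (q ^ k))"
    using V[of k] expansion_at_nodes_generic[OF generic', of V k] by (simp add: a'_def mult.assoc)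
  finally show "(\<Sum>m\<le>k. expansion_basis q (a * q ^ (2 * K)) m (q ^ k)
                   * (wp_coeff q a (K + m) * qtransform q a B (K + m) * q ^ (K * m)))
              = (\<Sum>m\<le>k. expansion_basis q (a * q ^ (2 * K)) m (q ^ k)
                   * (wp_coeff q (a * q ^ (2 * K)) m * qtransform q (a * q ^ (2 * K)) V m))"
    using node_prod_node_nonzero[of K "K + k"] by (simp add: a'_def expansion_term_def mult_ac)
qed

lemma expansion_shifted:
  assumes generic: "\<And>j. a * q ^ j \<noteq> 1"
    and holo: "\<Phi> holomorphic_on ball 0 \<rho>" and "1 < \<rho>" and s: "s \<in> ball 0 \<rho>"
    and nodes: "\<And>k. node_prod q K (q ^ (K + k)) * qpoch_inf (a * q ^ (2 * K) * q) q * \<Phi> (q ^ k)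
                  = qpoch_inf (a * q) q * B (K + k) - (\<Sum>n<K. expansion_term q a B n (q ^ (K + k)))"
  shows "(\<lambda>n. expansion_term q a B n (q ^ K * s))
         sums (node_prod q K (q ^ K * s) * (qpoch_inf (a * q ^ (2 * K) * q) q * \<Phi> s)
               + (\<Sum>n<K. expansion_term q a B n (q ^ K * s)))"
proof -
  define a' where "a' = a * q ^ (2 * K)"
  have generic': "a' * q ^ j \<noteq> 1" for j
    using generic[of "2 * K + j"] by (simp add: a'_def power_add mult.assoc)
  have "expansion_term q a B (m + K) (q ^ K * s)
        = node_prod q K (q ^ K * s) * expansion_term q a' (\<lambda>k. \<Phi> (q ^ k)) m s" for m
    using shifted_expansion_coeffs[OF generic nodes, of m] q_nonzero
    by (simp add: expansion_term_def expansion_basis_shift add.commute a'_def mult_ac)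
  then have "(\<lambda>m. expansion_term q a B (m + K) (q ^ K * s))
             sums (node_prod q K (q ^ K * s) * (qpoch_inf (a' * q) q * \<Phi> s))"
    using sums_mult[OF expansion_generic[OF generic' holo \<open>1 < \<rho>\<close> s]] by simp
  then show ?thesis
    by (subst (asm) sums_iff_shift) (simp add: a'_def)
qed

lemma first_node_in_ball:
  assumes "0 < r"
  obtains K where "norm q ^ K < r" and "\<And>i. i < K \<Longrightarrow> r \<le> norm q ^ i"
proof
  have "\<exists>K. norm q ^ K < r"
    using real_arch_pow_inv[OF assms norm_q_less_1] by blast
  then show "norm q ^ (LEAST K. norm q ^ K < r) < r"
    by (rule LeastI_ex)
  show "r \<le> norm q ^ i" if "i < (LEAST K. norm q ^ K < r)" for i
    using not_less_Least[OF that] by simp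
qed

lemma expansion_generic_ball:
  assumes generic: "\<And>j. a * q ^ j \<noteq> 1" and holo: "R holomorphic_on ball 0 r" and "0 < r"
    and nodes: "\<And>k. norm q ^ k < r \<Longrightarrow> R (q ^ k) = qpoch_inf (a * q) q * B k"
    and s: "s \<in> ball 0 r"
  shows "(\<lambda>n. expansion_term q a B n s) sums R s"
proof -
  \<comment> \<open>The nodes outside the disc are \<open>q^i\<close> for \<open>i < K\<close>; after dividing them off, the disc is rescaled
    to radius \<open>r / |q|^K > 1\<close>.\<close>
  obtain K where K: "norm q ^ K < r" and K_min: "\<And>i. i < K \<Longrightarrow> r \<le> norm q ^ i"
    using first_node_in_ball[OF \<open>0 < r\<close>] by blast
  define P where "P = qpoch_inf (a * q ^ (2 * K) * q) q"
  have "a * q ^ (2 * K) * q * q ^ k \<noteq> 1" for k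
    using generic[of "2 * K + Suc k"] by (simp add: power_add mult_ac)
  then have "P \<noteq> 0"
    by (simp add: P_def qpoch_inf_eq_0_iff)
  define \<rho> where "\<rho> = r / norm q ^ K"
  have "1 < \<rho>"
    using K q_nonzero by (simp add: \<rho>_def)
  have inball: "q ^ K * z \<in> ball 0 r" if "z \<in> ball 0 \<rho>" for z
    using that q_nonzero by (simp add: \<rho>_def norm_mult norm_power field_simps)
  have node_prod_nonzero: "node_prod q K (q ^ K * z) \<noteq> 0" if "z \<in> ball 0 \<rho>" for z
  proof
    assume "node_prod q K (q ^ K * z) = 0"
    then obtain i where "i < K" "q ^ K * z = q ^ i"
      by (auto simp: node_prod_def)
    then show False
      using inball[OF that] K_min by (fastforce simp: norm_power)
  qed
  define \<Phi> where "\<Phi> z = (R (q ^ K * z) - (\<Sum>n<K. expansion_term q a B n (q ^ K * z)))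
                         / (node_prod q K (q ^ K * z) * P)" for z
  have "(R \<circ> (\<lambda>z. q ^ K * z)) holomorphic_on ball 0 \<rho>"
    by (rule holomorphic_on_compose_gen[OF _ holo]) (auto intro: holomorphic_intros inball)
  then have "\<Phi> holomorphic_on ball 0 \<rho>"
    unfolding \<Phi>_def o_def node_prod_def using node_prod_nonzero \<open>P \<noteq> 0\<close>
    by (intro holomorphic_intros) (auto simp: node_prod_def)
  moreover have "node_prod q K (q ^ (K + k)) * P * \<Phi> (q ^ k)
      = qpoch_inf (a * q) q * B (K + k) - (\<Sum>n<K. expansion_term q a B n (q ^ (K + k)))" for k
  proof -
    have "norm q ^ (K + k) < r"
      using K power_decreasing[of K "K + k" "norm q"] norm_q_less_1 by simp
    then show ?thesis
      using nodes[of "K + k"] node_prod_node_nonzero[of K "K + k"] \<open>P \<noteq> 0\<close>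
      by (simp add: \<Phi>_def power_add)
  qed
  moreover have "s / q ^ K \<in> ball 0 \<rho>"
    using s q_nonzero by (simp add: \<rho>_def norm_divide norm_power divide_strict_right_mono)
  ultimately have "(\<lambda>n. expansion_term q a B n s)
      sums (node_prod q K s * (P * \<Phi> (s / q ^ K)) + (\<Sum>n<K. expansion_term q a B n s))"
    using expansion_shifted[OF generic _ \<open>1 < \<rho>\<close>, of \<Phi> "s / q ^ K" K B] q_nonzero
    by (simp add: P_def)
  moreover have "node_prod q K s * (P * \<Phi> (s / q ^ K)) + (\<Sum>n<K. expansion_term q a B n s) = R s"
    using node_prod_nonzero[OF \<open>s / q ^ K \<in> ball 0 \<rho>\<close>] \<open>P \<noteq> 0\<close> q_nonzero
    by (simp add: \<Phi>_def)
  ultimately show ?thesis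
    by simp
qed

lemma expansion_degenerate:
  assumes "a \<noteq> 1" and "a * q ^ j = 1" and holo: "R holomorphic_on ball 0 r" and "0 < r"
    and nodes: "\<And>k. norm q ^ k < r \<Longrightarrow> R (q ^ k) = qpoch_inf (a * q) q * B k"
    and s: "s \<in> ball 0 r"
  shows "(\<lambda>n. expansion_term q a B n s) sums R s"
proof -
  have vanish: "expansion_term q a B n z = 0" if "j < n" for n z
    using that assms(2) by (auto simp: expansion_term_def wp_coeff_def qpoch_eq_0_iff)
  define S where "S z = (\<Sum>n\<le>j. expansion_term q a B n z)" for z
  have "(\<lambda>z. S z - R z) holomorphic_on ball 0 r"
    unfolding S_def by (intro holomorphic_intros holo)
  moreover have "S (q ^ k) - R (q ^ k) = 0" if "norm q ^ k < r" for k
  proof -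
    have "(\<lambda>n. expansion_term q a B n (q ^ k)) sums S (q ^ k)"
      unfolding S_def by (rule sums_finite) (auto simp: vanish)
    moreover have "(\<lambda>n. expansion_term q a B n (q ^ k)) sums (qpoch_inf (a * q) q * B k)"
      using assms(1) by (rule expansion_at_node_sums)
    ultimately show ?thesis
      using nodes[OF that] by (simp add: sums_iff)
  qed
  ultimately have "S s - R s = 0"
    using eq_0_if_eq_0_at_nodes \<open>0 < r\<close> s by blast
  moreover have "(\<lambda>n. expansion_term q a B n s) sums S s"
    unfolding S_def by (rule sums_finite) (auto simp: vanish)
  ultimately show ?thesis
    by simp
qed

theorem liu_expansion:
  assumes "a \<noteq> 1" and "R holomorphic_on ball 0 r" and "0 < r"
    and "\<And>k. norm q ^ k < r \<Longrightarrow> R (q ^ k) = qpoch_inf (a * q) q * B k"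
    and "s \<in> ball 0 r"
  shows "(\<lambda>n. expansion_term q a B n s) sums R s"
  using expansion_generic_ball[OF _ assms(2-)] expansion_degenerate[OF assms(1) _ assms(2-)] by blast

end

section \<open>Expansion of a quotient of infinite products\<close>

lemma radius_with_norm_mult_less_1:
  fixes x y t :: complex
  assumes "norm (x * t) < 1" and "norm (y * t) < 1"
  obtains r where "norm t < r" and "\<And>s. norm s < r \<Longrightarrow> norm (x * s) < 1 \<and> norm (y * s) < 1"
proof
  define M where "M = max (norm x) (norm y)"
  have "0 \<le> M" "M * norm t < 1"
    using assms by (auto simp: M_def norm_mult max_def)
  define r where "r = norm t + (1 - M * norm t) / (M + 1)"
  show "norm t < r"
    using \<open>M * norm t < 1\<close> \<open>0 \<le> M\<close> by (simp add: r_def)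
  have "M * r < 1"
  proof -
    have "M * ((1 - M * norm t) / (M + 1)) < 1 - M * norm t"
      using \<open>M * norm t < 1\<close> \<open>0 \<le> M\<close> by (simp add: field_simps)
    then show ?thesis
      by (simp add: r_def distrib_left)
  qed
  show "norm (x * s) < 1 \<and> norm (y * s) < 1" if "norm s < r" for s
  proof -
    have "M * norm s \<le> M * r"
      using that \<open>0 \<le> M\<close> by (simp add: mult_left_mono)
    moreover have "norm x * norm s \<le> M * norm s" "norm y * norm s \<le> M * norm s"
      by (simp_all add: M_def mult_right_mono)
    ultimately show ?thesis
      using \<open>M * r < 1\<close> by (simp add: norm_mult)
  qed
qed

context qbase
begin

lemma qphi_terminating_4_3:
  "qphi [q powi (- int n), a * q ^ n, x, y] [u, v, w] q q
   = qtransform q a (\<lambda>k. qpoch x q k * qpoch y q k / (qpoch u q k * qpoch v q k * qpoch w q k)) n"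
    (is "_ = qtransform q a ?B n")
proof -
  have "qpochs [q powi (- int n), a * q ^ n, x, y] q k / qpochs [q, u, v, w] q k
          * ((-1) ^ k * q ^ (k * (k - 1) div 2)) powi (1 + int (length [u, v, w]) - int (length [q powi (- int n), a * q ^ n, x, y]))
          * q ^ k
        = qkernel q a n k * ?B k" for k
    by (simp add: qpochs_def qkernel_def power_int_minus mult_ac)
  moreover have "(\<lambda>k. qkernel q a n k * ?B k) sums qtransform q a ?B n"
    unfolding qtransform_def by (rule sums_finite) (auto simp: qkernel_def qpoch_inverse_pow_eq_0)
  ultimately show ?thesis
    by (simp add: qphi_def sums_iff)
qed

lemma node_prod_eq_qpoch:
  assumes "t \<noteq> 0" shows "node_prod q n t = qpoch (inverse t) q n * t ^ n"
proof -
  have "node_prod q n t = (\<Prod>i<n. (1 - inverse t * q ^ i) * t)"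
    unfolding node_prod_def using assms by (intro prod.cong refl) (simp add: field_simps)
  then show ?thesis
    by (simp add: qpoch_def prod.distrib)
qed

lemma well_poised_term_eq_expansion_term:
  assumes "c \<noteq> 0" and "qpoch_inf (a * c) q \<noteq> 0"
  shows "(1 - a * q ^ (2 * n)) * qpochs [a, q / c] q n * (c / q) ^ n / ((1 - a) * qpochs [q, a * c] q n)
           * qtransform q a B n
         = expansion_term q a B n (c / q) / qpoch_inf (a * c) q"
proof -
  have split: "qpoch_inf (a * c) q = qpoch (a * c) q n * qpoch_inf (a * c * q ^ n) q"
    by (rule qpoch_inf_split)
  have "a * q ^ Suc n * (c / q) = a * c * q ^ n"
    using q_nonzero by (simp add: field_simps)
  moreover have "node_prod q n (c / q) = qpoch (q / c) q n * (c / q) ^ n"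
    using node_prod_eq_qpoch[of "c / q" n] q_nonzero assms(1) by simp
  ultimately have "expansion_basis q a n (c / q) = qpoch (q / c) q n * (c / q) ^ n * qpoch_inf (a * c * q ^ n) q"
    by (simp only: expansion_basis_def)
  then have "expansion_term q a B n (c / q) / qpoch_inf (a * c) q
             = wp_coeff q a n * qtransform q a B n * (qpoch (q / c) q n * (c / q) ^ n) / qpoch (a * c) q n"
    using assms(2) split by (simp add: expansion_term_def field_simps)
  then show ?thesis
    by (simp add: wp_coeff_def qpochs_def divide_inverse ac_simps)
qed

lemma expansion_qpoch_ratio:
  assumes "a \<noteq> 1" and nonzero: "qpoch_inf u q \<noteq> 0" "qpoch_inf v q \<noteq> 0" "qpoch_inf w q \<noteq> 0"
    and "norm (x * t) < 1" "norm (y * t) < 1"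
  shows "(\<lambda>n. expansion_term q a (\<lambda>k. qpoch x q k * qpoch y q k / (qpoch u q k * qpoch v q k * qpoch w q k)) n t)
         sums (qpoch_inf (a * q) q * qpoch_inf x q * qpoch_inf y q
                 * qpoch_inf (u * t) q * qpoch_inf (v * t) q * qpoch_inf (w * t) q
               / (qpoch_inf u q * qpoch_inf v q * qpoch_inf w q * qpoch_inf (x * t) q * qpoch_inf (y * t) q))"
proof -
  define R where "R s = qpoch_inf (a * q) q * qpoch_inf x q * qpoch_inf y q
                         * qpoch_inf (u * s) q * qpoch_inf (v * s) q * qpoch_inf (w * s) q
                       / (qpoch_inf u q * qpoch_inf v q * qpoch_inf w q * qpoch_inf (x * s) q * qpoch_inf (y * s) q)" for s
  obtain r where r: "norm t < r" and small: "\<And>s. norm s < r \<Longrightarrow> norm (x * s) < 1 \<and> norm (y * s) < 1"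
    using radius_with_norm_mult_less_1[OF assms(5,6)] by blast
  have "R holomorphic_on ball 0 r"
    unfolding R_def using small nonzero by (intro holomorphic_intros) (auto intro!: qpoch_inf_nonzero)
  moreover have "R (q ^ k) = qpoch_inf (a * q) q * (qpoch x q k * qpoch y q k / (qpoch u q k * qpoch v q k * qpoch w q k))"
    if "norm q ^ k < r" for k
  proof -
    have "qpoch_inf (x * q ^ k) q \<noteq> 0" "qpoch_inf (y * q ^ k) q \<noteq> 0"
      using small[of "q ^ k"] that by (auto simp: norm_power intro!: qpoch_inf_nonzero)
    moreover have "qpoch_inf (z * q ^ k) q \<noteq> 0" if "qpoch_inf z q \<noteq> 0" for z
      using that qpoch_inf_split[of z k] by auto
    ultimately show ?thesis
      using nonzero unfolding R_def
      by (simp add: qpoch_inf_split[of x k] qpoch_inf_split[of y k] qpoch_inf_split[of u k]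
                    qpoch_inf_split[of v k] qpoch_inf_split[of w k] field_simps)
  qed
  ultimately show ?thesis
    using liu_expansion[OF assms(1)] r norm_ge_zero[of t] by (fastforce simp: R_def)
qed

end

theorem theorem4p1:
  fixes q \<alpha> a b c \<beta> \<gamma> :: complex
  assumes "0 < norm q" and "norm q < 1"
    and "norm (\<alpha> * \<beta> * a * b * c / q^2) < 1"
    and "norm (\<alpha> * \<gamma> * a * b * c / q^2) < 1"
    and "\<alpha> \<noteq> 1" and "c \<noteq> 0"
    and "\<And>n. qpochs [q, \<alpha> * c] q n \<noteq> 0"
    and "\<And>n. qpochs [\<alpha> * a, \<alpha> * b, \<alpha> * \<beta> * \<gamma> * a * b / q] q n \<noteq> 0"
    and "qpochs_inf [\<alpha> * a, \<alpha> * b, \<alpha> * c, \<alpha> * \<beta> * a * b * c / q^2,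
                     \<alpha> * \<gamma> * a * b * c / q^2, \<alpha> * \<beta> * \<gamma> * a * b / q] q \<noteq> 0"
  shows "(\<lambda>n. (1 - \<alpha> * q ^ (2 * n)) * qpochs [\<alpha>, q / c] q n * (c / q) ^ n
              / ((1 - \<alpha>) * qpochs [q, \<alpha> * c] q n)
            * qphi [q powi (- int n), \<alpha> * q ^ n, \<alpha> * \<beta> * a * b / q, \<alpha> * \<gamma> * a * b / q]
                   [\<alpha> * a, \<alpha> * b, \<alpha> * \<beta> * \<gamma> * a * b / q] q q)
         sums (qpochs_inf [q * \<alpha>, \<alpha> * a * c / q, \<alpha> * b * c / q, \<alpha> * \<beta> * a * b / q,
                           \<alpha> * \<gamma> * a * b / q, \<alpha> * \<beta> * \<gamma> * a * b * c / q^2] q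
               / qpochs_inf [\<alpha> * a, \<alpha> * b, \<alpha> * c, \<alpha> * \<beta> * a * b * c / q^2,
                           \<alpha> * \<gamma> * a * b * c / q^2, \<alpha> * \<beta> * \<gamma> * a * b / q] q)"
proof -
  \<comment> \<open>The hypotheses on finite products are implied by \<open>|q| < 1\<close> and the one on infinite products.\<close>
  interpret qbase q
    using assms(1,2) by unfold_locales auto
  have nonzero: "qpoch_inf (\<alpha> * a) q \<noteq> 0" "qpoch_inf (\<alpha> * b) q \<noteq> 0" "qpoch_inf (\<alpha> * c) q \<noteq> 0"
    "qpoch_inf (\<alpha> * \<beta> * \<gamma> * a * b / q) q \<noteq> 0"
    using assms(9) by (auto simp: qpochs_inf_def)
  have products: "\<alpha> * \<beta> * a * b / q * (c / q) = \<alpha> * \<beta> * a * b * c / q^2"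
    "\<alpha> * \<gamma> * a * b / q * (c / q) = \<alpha> * \<gamma> * a * b * c / q^2"
    "\<alpha> * \<beta> * \<gamma> * a * b / q * (c / q) = \<alpha> * \<beta> * \<gamma> * a * b * c / q^2"
    "\<alpha> * a * (c / q) = \<alpha> * a * c / q" "\<alpha> * b * (c / q) = \<alpha> * b * c / q" "\<alpha> * q = q * \<alpha>"
    by (simp_all add: power2_eq_square)
  note ratio_expansion = expansion_qpoch_ratio[OF assms(5) nonzero(1,2,4), of "\<alpha> * \<beta> * a * b / q" "c / q"
                     "\<alpha> * \<gamma> * a * b / q", unfolded products]
  show ?thesis
    unfolding qphi_terminating_4_3 well_poised_term_eq_expansion_term[OF assms(6) nonzero(3)]
    using sums_divide[OF ratio_expansion[OF assms(3,4)], of "qpoch_inf (\<alpha> * c) q"]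
    by (simp add: qpochs_inf_def divide_inverse ac_simps)
qed

end
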